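(* Consider the graded polynomial ring $\mathbb{C}[x_1,x_2,x_3,y]$ with $\deg x_i=1$, $\deg y=2$. Let $F=y^3+g(x_1,x_2,x_3)y+h(x_1,x_2,x_3)$ and $F'=y^3+g'(x_1,x_2,x_3)y+h'(x_1,x_2,x_3)$, with $g,g'$ homogeneous of degree $4$ and $h,h'$ homogeneous of degree $6$. Let $J=\mathrm{Jac}(F)$, $J'=\mathrm{Jac}(F')$, and let $J^e,J'^e$ be their even-degree subalgebras. Let $\phi\colon J^e\to J'^e$ be an isomorphism of graded $\mathbb{C}$-algebras. Then there is an isomorphism of graded $\mathbb{C}$-algebras $\psi\colon\mathbb{C}[x_i,y]\to\mathbb{C}[x_i,y]$ whose restriction $\mathbb{C}[x_i,y]^e\to\mathbb{C}[x_i,y]^e$ to even-degree parts induces $\phi\colon J^e\to J'^e$.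
   Context: $\mathrm{Jac}(F)=\mathbb{C}[x_1,x_2,x_3,y]/(\partial_yF,\partial_{x_1}F,\partial_{x_2}F,\partial_{x_3}F)$, graded. For a graded ring $R$, $R^e=\bigoplus_{n}R_{2n}$. *)

theory Defs
  imports Complex_Main "HOL-Library.Poly_Mapping" "HOL-Algebra.QuotRing"
begin

datatype var = X1 | X2 | X3 | Y

type_synonym mpoly = "(var \<Rightarrow>\<^sub>0 nat) \<Rightarrow>\<^sub>0 complex"

definition const :: "complex \<Rightarrow> mpoly" where
  "const c = Poly_Mapping.single 0 c"

definition pvar :: "var \<Rightarrow> mpoly" where
  "pvar v = Poly_Mapping.single (Poly_Mapping.single v 1) 1"

definition wdeg :: "(var \<Rightarrow>\<^sub>0 nat) \<Rightarrow> nat" where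
  "wdeg m = Poly_Mapping.lookup m X1 + Poly_Mapping.lookup m X2 + Poly_Mapping.lookup m X3 + 2 * Poly_Mapping.lookup m Y"

definition homogeneous :: "nat \<Rightarrow> mpoly \<Rightarrow> bool" where
  "homogeneous d p \<longleftrightarrow> (\<forall>m\<in>Poly_Mapping.keys p. wdeg m = d)"

definition even_poly :: "mpoly \<Rightarrow> bool" where
  "even_poly p \<longleftrightarrow> (\<forall>m\<in>Poly_Mapping.keys p. even (wdeg m))"

definition y_free :: "mpoly \<Rightarrow> bool" where
  "y_free p \<longleftrightarrow> (\<forall>m\<in>Poly_Mapping.keys p. Poly_Mapping.lookup m Y = 0)"

definition pderiv_var :: "var \<Rightarrow> mpoly \<Rightarrow> mpoly" where
  "pderiv_var v p = (\<Sum>m\<in>Poly_Mapping.keys p.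
      Poly_Mapping.single (m - Poly_Mapping.single v 1) (Poly_Mapping.lookup p m * of_nat (Poly_Mapping.lookup m v)))"

definition mpoly_ring :: "mpoly ring" where
  "mpoly_ring = \<lparr>carrier = UNIV, mult = (*), one = 1, zero = 0, add = (+)\<rparr>"

definition jac_ideal :: "mpoly \<Rightarrow> mpoly set" where
  "jac_ideal F = genideal mpoly_ring (range (\<lambda>v. pderiv_var v F))"

definition jcoset :: "mpoly \<Rightarrow> mpoly \<Rightarrow> mpoly set" where
  "jcoset F p = a_r_coset mpoly_ring (jac_ideal F) p"

definition Jac :: "mpoly \<Rightarrow> mpoly set ring" where
  "Jac F = mpoly_ring Quot (jac_ideal F)"

definition Jac_even :: "mpoly \<Rightarrow> mpoly set ring" where
  "Jac_even F = (Jac F)\<lparr>carrier := {jcoset F p | p. even_poly p}\<rparr>"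

definition graded_alg_iso_even :: "mpoly \<Rightarrow> mpoly \<Rightarrow> (mpoly set \<Rightarrow> mpoly set) \<Rightarrow> bool" where
  "graded_alg_iso_even F F' \<phi> \<longleftrightarrow>
     \<phi> \<in> ring_iso (Jac_even F) (Jac_even F') \<and>
     (\<forall>c p. even_poly p \<longrightarrow>
        \<phi> (jcoset F (const c * p)) = jcoset F' (const c) \<otimes>\<^bsub>Jac F'\<^esub> \<phi> (jcoset F p)) \<and>
     (\<forall>n p. homogeneous (2 * n) p \<longrightarrow>
        (\<exists>q. homogeneous (2 * n) q \<and> \<phi> (jcoset F p) = jcoset F' q))"

definition graded_alg_auto :: "(mpoly \<Rightarrow> mpoly) \<Rightarrow> bool" where
  "graded_alg_auto \<psi> \<longleftrightarrow>
     \<psi> \<in> ring_iso mpoly_ring mpoly_ring \<and>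
     (\<forall>c p. \<psi> (const c * p) = const c * \<psi> p) \<and>
     (\<forall>d p. homogeneous d p \<longrightarrow> homogeneous d (\<psi> p))"

end

theory Submission
  imports Defs
begin

text \<open>
  Let \<open>F = y\<^sup>3 + g y + h\<close>. Its partial derivatives have degrees 5, 5, 5 and 4, so the Jacobian
  ideal vanishes in degrees below 4 and is spanned by \<open>\<partial>\<^sub>y F = 3 y\<^sup>2 + g\<close> in degree 4. Hence \<open>\<phi>\<close>
  restricts to a linear automorphism of the 7-dimensional space of quadrics; let \<open>\<phi>(u)\<close> be a
  quadric representing the image of the monomial \<open>u\<close>. By multiplicativity the \<open>\<phi>(x\<^sub>i x\<^sub>j)\<close>
  satisfy the Veronese relations \<open>\<phi>(x\<^sub>i x\<^sub>j) \<phi>(x\<^sub>k x\<^sub>l) = \<phi>(x\<^sub>i x\<^sub>k) \<phi>(x\<^sub>j x\<^sub>l)\<close> modulo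
  \<open>3 y\<^sup>2 + g'\<close>. Comparing powers of \<open>y\<close> and using the linear independence of the \<open>\<phi>(u)\<close> shows
  that the \<open>\<phi>(x\<^sub>i x\<^sub>j)\<close> do not involve \<open>y\<close> and satisfy the relations exactly. So the symmetric
  matrix \<open>(\<phi>(x\<^sub>i x\<^sub>j)(x))\<close> has rank at most one at every point \<open>x\<close>, and restricting it to the
  lines through a point where it is nonzero yields \<open>\<phi>(x\<^sub>i x\<^sub>j) = l\<^sub>i l\<^sub>j\<close> for linearly
  independent linear forms \<open>l\<^sub>i\<close>. The substitution \<open>x\<^sub>i \<mapsto> l\<^sub>i, y \<mapsto> \<phi>(y)\<close> is a graded
  automorphism, and it induces \<open>\<phi>\<close> because the even part of the polynomial ring is generated
  by quadrics.
\<close>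

section \<open>Polynomials in $x_1, x_2, x_3, y$\<close>

lemma cring_mpoly_ring: "cring mpoly_ring"
  unfolding mpoly_ring_def
  by unfold_locales (auto simp: algebra_simps Units_def, metis add.right_inverse)

lemma ring_mpoly_ring: "ring mpoly_ring"
  using cring_mpoly_ring cring.axioms(1) by blast

lemma mpoly_ring_simps [simp]:
  "carrier mpoly_ring = UNIV" "mult mpoly_ring = (*)" "one mpoly_ring = 1"
  "zero mpoly_ring = 0" "add mpoly_ring = (+)"
  by (simp_all add: mpoly_ring_def)

lemma a_inv_mpoly_ring [simp]: "a_inv mpoly_ring p = - p"
proof -
  interpret ring mpoly_ring by (rule ring_mpoly_ring)
  have "a_inv mpoly_ring p + p = 0" using l_neg[of p] by simp
  then show ?thesis by (simp add: eq_neg_iff_add_eq_0 add.commute)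
qed

definition expo :: "nat \<Rightarrow> nat \<Rightarrow> nat \<Rightarrow> nat \<Rightarrow> (var \<Rightarrow>\<^sub>0 nat)" where
  "expo a b c d = Poly_Mapping.single X1 a + Poly_Mapping.single X2 b
     + Poly_Mapping.single X3 c + Poly_Mapping.single Y d"

lemma lookup_expo [simp]:
  "Poly_Mapping.lookup (expo a b c d) X1 = a" "Poly_Mapping.lookup (expo a b c d) X2 = b"
  "Poly_Mapping.lookup (expo a b c d) X3 = c" "Poly_Mapping.lookup (expo a b c d) Y = d"
  by (simp_all add: expo_def lookup_add lookup_single)

lemma exponent_eqI:
  fixes m n :: "var \<Rightarrow>\<^sub>0 nat"
  assumes "Poly_Mapping.lookup m X1 = Poly_Mapping.lookup n X1"
    "Poly_Mapping.lookup m X2 = Poly_Mapping.lookup n X2"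
    "Poly_Mapping.lookup m X3 = Poly_Mapping.lookup n X3"
    "Poly_Mapping.lookup m Y = Poly_Mapping.lookup n Y"
  shows "m = n"
proof (rule poly_mapping_eqI)
  fix v show "Poly_Mapping.lookup m v = Poly_Mapping.lookup n v"
    using assms by (cases v) auto
qed

lemma expo_eq_iff [simp]: "expo a b c d = expo a' b' c' d' \<longleftrightarrow> a = a' \<and> b = b' \<and> c = c' \<and> d = d'"
  by (metis lookup_expo)

lemma expo_add [simp]: "expo a b c d + expo a' b' c' d' = expo (a + a') (b + b') (c + c') (d + d')"
  by (rule exponent_eqI) (simp_all add: lookup_add)

lemma expo_diff [simp]: "expo a b c d - expo a' b' c' d' = expo (a - a') (b - b') (c - c') (d - d')"
  by (rule exponent_eqI) (simp_all add: lookup_minus)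

lemma expo_lookup:
  "m = expo (Poly_Mapping.lookup m X1) (Poly_Mapping.lookup m X2) (Poly_Mapping.lookup m X3) (Poly_Mapping.lookup m Y)"
  by (rule exponent_eqI) simp_all

lemma expo_0 [simp]: "expo 0 0 0 0 = 0"
  by (rule exponent_eqI) simp_all

lemma single_var_expo:
  "Poly_Mapping.single X1 k = expo k 0 0 0" "Poly_Mapping.single X2 k = expo 0 k 0 0"
  "Poly_Mapping.single X3 k = expo 0 0 k 0" "Poly_Mapping.single Y k = expo 0 0 0 k"
  by (rule exponent_eqI; simp add: lookup_single)+

lemma pvar_power_expo:
  "pvar X1 ^ k = Poly_Mapping.single (expo k 0 0 0) 1" "pvar X2 ^ k = Poly_Mapping.single (expo 0 k 0 0) 1"
  "pvar X3 ^ k = Poly_Mapping.single (expo 0 0 k 0) 1" "pvar Y ^ k = Poly_Mapping.single (expo 0 0 0 k) 1"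
  by (induction k) (simp_all add: pvar_def single_var_expo mult_single)

lemmas pvar_expo = pvar_power_expo[where k = 1, simplified]

lemma wdeg_expo [simp]: "wdeg (expo a b c d) = a + b + c + 2 * d"
  by (simp add: wdeg_def)

lemma wdeg_add: "wdeg (m + n) = wdeg m + wdeg n"
  by (simp add: wdeg_def lookup_add)

lemma wdeg_0 [simp]: "wdeg 0 = 0"
  by (simp add: wdeg_def)

lemma wdeg_eq_0_iff: "wdeg m = 0 \<longleftrightarrow> m = 0"
  by (subst (2) expo_lookup) (auto simp: wdeg_def simp flip: expo_0)

lemma poly_mapping_sum_single_superset:
  fixes p :: "'a \<Rightarrow>\<^sub>0 'b::comm_monoid_add"
  assumes "finite S" "Poly_Mapping.keys p \<subseteq> S"
  shows "p = (\<Sum>k\<in>S. Poly_Mapping.single k (Poly_Mapping.lookup p k))"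
proof (rule poly_mapping_eqI)
  fix m
  have "Poly_Mapping.lookup (\<Sum>k\<in>S. Poly_Mapping.single k (Poly_Mapping.lookup p k)) m
      = (if m \<in> S then Poly_Mapping.lookup p m else 0)"
    using assms(1) by (simp add: lookup_sum lookup_single when_def)
  also have "\<dots> = Poly_Mapping.lookup p m"
    using assms(2) by (auto simp: in_keys_iff)
  finally show "Poly_Mapping.lookup p m
      = Poly_Mapping.lookup (\<Sum>k\<in>S. Poly_Mapping.single k (Poly_Mapping.lookup p k)) m"
    by simp
qed

lemma poly_mapping_sum_single:
  fixes p :: "'a \<Rightarrow>\<^sub>0 'b::comm_monoid_add"
  shows "p = (\<Sum>k\<in>Poly_Mapping.keys p. Poly_Mapping.single k (Poly_Mapping.lookup p k))"
  by (rule poly_mapping_sum_single_superset) auto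

lemma lookup_mult_single_shift:
  fixes p :: mpoly
  shows "Poly_Mapping.lookup (p * Poly_Mapping.single n c) (m + n) = Poly_Mapping.lookup p m * c"
proof -
  have "p * Poly_Mapping.single n c
      = (\<Sum>k\<in>Poly_Mapping.keys p. Poly_Mapping.single (k + n) (Poly_Mapping.lookup p k * c))"
    by (subst poly_mapping_sum_single) (simp add: sum_distrib_right mult_single)
  then show ?thesis
    by (simp add: lookup_sum lookup_single when_def in_keys_iff)
qed

lemma single_one_eq_iff [simp]:
  "Poly_Mapping.single a (1::complex) = Poly_Mapping.single b 1 \<longleftrightarrow> a = b"
  by (metis lookup_single_eq lookup_single_not_eq one_neq_zero)

lemma mult_single_one_eq_0_iff: "(p :: mpoly) * Poly_Mapping.single n 1 = 0 \<longleftrightarrow> p = 0"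
proof
  assume "p * Poly_Mapping.single n 1 = 0"
  then show "p = 0"
    by (intro poly_mapping_eqI) (metis lookup_mult_single_shift lookup_zero mult_1_right)
qed simp

lemma const_0 [simp]: "const 0 = 0" by (simp add: const_def)
lemma const_1 [simp]: "const 1 = 1" by (simp add: const_def)
lemma const_add: "const (a + b) = const a + const b" by (simp add: const_def single_add)
lemma const_diff: "const (a - b) = const a - const b" by (simp add: const_def single_diff)
lemma const_uminus: "const (- a) = - const a" by (simp add: const_def single_uminus)
lemma const_mult: "const (a * b) = const a * const b" by (simp add: const_def mult_single)
lemma const_numeral: "const (numeral n) = numeral n" by (simp add: const_def)

lemma const_power: "const (a ^ n) = const a ^ n"
  by (induction n) (simp_all add: const_mult)

lemma const_sum: "const (sum f A) = (\<Sum>x\<in>A. const (f x))"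
  by (induction A rule: infinite_finite_induct) (simp_all add: const_add)

lemma const_eq_iff [simp]: "const a = const b \<longleftrightarrow> a = b"
  by (metis const_def lookup_single_eq)

lemma const_eq_0_iff [simp]: "const a = 0 \<longleftrightarrow> a = 0"
  by (metis const_0 const_eq_iff)

lemmas const_simps = const_add const_diff const_uminus const_mult const_power const_numeral

lemma const_mult_single: "const c * Poly_Mapping.single m d = Poly_Mapping.single m (c * d)"
  by (simp add: const_def mult_single)

lemma lookup_const: "Poly_Mapping.lookup (const c) m = (if m = 0 then c else 0)"
  by (simp add: const_def lookup_single)

lemma lookup_const_mult: "Poly_Mapping.lookup (const c * p) m = c * Poly_Mapping.lookup p m"
  using lookup_mult_single_shift[of p 0 c m] by (simp add: const_def mult.commute)

lemma const_mult_cancel: "c \<noteq> 0 \<Longrightarrow> const c * (const (1 / c) * p) = p"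
  by (simp flip: mult.assoc const_mult)

section \<open>Gradings\<close>

definition homog :: "((var \<Rightarrow>\<^sub>0 nat) \<Rightarrow> nat) \<Rightarrow> nat \<Rightarrow> mpoly \<Rightarrow> bool" where
  "homog \<delta> d p \<longleftrightarrow> (\<forall>m\<in>Poly_Mapping.keys p. \<delta> m = d)"

definition additive :: "((var \<Rightarrow>\<^sub>0 nat) \<Rightarrow> nat) \<Rightarrow> bool" where
  "additive \<delta> \<longleftrightarrow> (\<forall>m n. \<delta> (m + n) = \<delta> m + \<delta> n)"

lemma homog_0 [simp]: "homog \<delta> d 0"
  by (simp add: homog_def)

lemma homog_add: "homog \<delta> d p \<Longrightarrow> homog \<delta> d q \<Longrightarrow> homog \<delta> d (p + q)"
  unfolding homog_def using keys_add[of p q] by auto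

lemma homog_diff: "homog \<delta> d p \<Longrightarrow> homog \<delta> d q \<Longrightarrow> homog \<delta> d (p - q)"
  unfolding homog_def using keys_diff[of p q] by auto

lemma homog_sum: "(\<And>x. x \<in> A \<Longrightarrow> homog \<delta> d (f x)) \<Longrightarrow> homog \<delta> d (sum f A)"
  by (induction A rule: infinite_finite_induct) (auto intro: homog_add)

lemma homog_single: "homog \<delta> (\<delta> m) (Poly_Mapping.single m c)"
  by (simp add: homog_def)

lemma homog_mult:
  assumes "additive \<delta>" "homog \<delta> d p" "homog \<delta> e q"
  shows "homog \<delta> (d + e) (p * q)"
  unfolding homog_def
proof
  fix m assume "m \<in> Poly_Mapping.keys (p * q)"
  then obtain a b where "m = a + b" "a \<in> Poly_Mapping.keys p" "b \<in> Poly_Mapping.keys q"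
    using keys_mult by blast
  then show "\<delta> m = d + e" using assms unfolding homog_def additive_def by auto
qed

lemma homog_const: "additive \<delta> \<Longrightarrow> homog \<delta> 0 (const c)"
  unfolding homog_def additive_def const_def by (simp, metis add_cancel_right_right)

lemma homog_const_mult: "additive \<delta> \<Longrightarrow> homog \<delta> d p \<Longrightarrow> homog \<delta> d (const c * p)"
  using homog_mult[of \<delta> 0 "const c" d p] homog_const by simp

lemma homog_power: "additive \<delta> \<Longrightarrow> homog \<delta> d p \<Longrightarrow> homog \<delta> (k * d) (p ^ k)"
proof (induction k)
  case 0
  then show ?case using homog_const[of \<delta> 1] by simp
next
  case (Suc k)
  then show ?case using homog_mult[of \<delta> d p "k * d" "p ^ k"] by (simp add: add.commute)
qed

definition hcomp :: "((var \<Rightarrow>\<^sub>0 nat) \<Rightarrow> nat) \<Rightarrow> nat \<Rightarrow> mpoly \<Rightarrow> mpoly" where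
  "hcomp \<delta> d p = Abs_poly_mapping (\<lambda>m. if \<delta> m = d then Poly_Mapping.lookup p m else 0)"

lemma lookup_hcomp:
  "Poly_Mapping.lookup (hcomp \<delta> d p) m = (if \<delta> m = d then Poly_Mapping.lookup p m else 0)"
proof -
  have "{m. (if \<delta> m = d then Poly_Mapping.lookup p m else 0) \<noteq> 0} \<subseteq> Poly_Mapping.keys p"
    by (auto simp: in_keys_iff split: if_splits)
  then have "finite {m. (if \<delta> m = d then Poly_Mapping.lookup p m else 0) \<noteq> 0}"
    using finite_subset finite_keys by blast
  then show ?thesis unfolding hcomp_def by simp
qed

lemma keys_hcomp: "Poly_Mapping.keys (hcomp \<delta> d p) \<subseteq> Poly_Mapping.keys p"
  by (auto simp: in_keys_iff lookup_hcomp split: if_splits)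

lemma hcomp_add: "hcomp \<delta> d (p + q) = hcomp \<delta> d p + hcomp \<delta> d q"
  by (rule poly_mapping_eqI) (simp add: lookup_hcomp lookup_add)

lemma hcomp_diff: "hcomp \<delta> d (p - q) = hcomp \<delta> d p - hcomp \<delta> d q"
  by (rule poly_mapping_eqI) (simp add: lookup_hcomp lookup_minus)

lemma hcomp_0 [simp]: "hcomp \<delta> d 0 = 0"
  by (rule poly_mapping_eqI) (simp add: lookup_hcomp)

lemma hcomp_sum: "hcomp \<delta> d (sum f A) = (\<Sum>x\<in>A. hcomp \<delta> d (f x))"
  by (induction A rule: infinite_finite_induct) (simp_all add: hcomp_add)

lemma homog_hcomp: "homog \<delta> d (hcomp \<delta> d p)"
  by (auto simp: homog_def in_keys_iff lookup_hcomp split: if_splits)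

lemma hcomp_homog: "homog \<delta> e p \<Longrightarrow> hcomp \<delta> d p = (if e = d then p else 0)"
  by (rule poly_mapping_eqI) (auto simp: lookup_hcomp homog_def in_keys_iff)

lemma hcomp_eq_0: "d \<notin> \<delta> ` Poly_Mapping.keys p \<Longrightarrow> hcomp \<delta> d p = 0"
  by (rule poly_mapping_eqI) (auto simp: lookup_hcomp in_keys_iff)

lemma sum_hcomp:
  assumes "finite D" "\<delta> ` Poly_Mapping.keys p \<subseteq> D"
  shows "(\<Sum>d\<in>D. hcomp \<delta> d p) = p"
proof (rule poly_mapping_eqI)
  fix m
  have "Poly_Mapping.lookup (\<Sum>d\<in>D. hcomp \<delta> d p) m = (if \<delta> m \<in> D then Poly_Mapping.lookup p m else 0)"
    using assms(1) by (simp add: lookup_sum lookup_hcomp)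
  also have "\<dots> = Poly_Mapping.lookup p m"
    using assms(2) by (auto simp: in_keys_iff image_subset_iff)
  finally show "Poly_Mapping.lookup (\<Sum>d\<in>D. hcomp \<delta> d p) m = Poly_Mapping.lookup p m" .
qed

lemma hcomp_mult_homog:
  assumes "additive \<delta>" "homog \<delta> e f"
  shows "hcomp \<delta> d (p * f) = (if e \<le> d then hcomp \<delta> (d - e) p * f else 0)"
proof -
  define D where "D = \<delta> ` Poly_Mapping.keys p"
  have fin: "finite D" unfolding D_def by simp
  have homog: "homog \<delta> (k + e) (hcomp \<delta> k p * f)" for k
    using homog_mult[OF assms(1) homog_hcomp assms(2)] .
  have "hcomp \<delta> d (p * f) = hcomp \<delta> d ((\<Sum>k\<in>D. hcomp \<delta> k p) * f)"
    using sum_hcomp[OF fin] D_def by simp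
  also have "\<dots> = (\<Sum>k\<in>D. if k = d - e \<and> e \<le> d then hcomp \<delta> k p * f else 0)"
    unfolding sum_distrib_right hcomp_sum hcomp_homog[OF homog]
    by (intro sum.cong) auto
  also have "\<dots> = (if e \<le> d then hcomp \<delta> (d - e) p * f else 0)"
    using fin hcomp_eq_0[of "d - e" \<delta> p] by (simp add: D_def)
  finally show ?thesis .
qed

lemma additive_wdeg: "additive wdeg"
  by (simp add: additive_def wdeg_add)

lemma homogeneous_iff_homog: "homogeneous d p \<longleftrightarrow> homog wdeg d p"
  by (simp add: homogeneous_def homog_def)

definition ydeg :: "(var \<Rightarrow>\<^sub>0 nat) \<Rightarrow> nat" where
  "ydeg m = Poly_Mapping.lookup m Y"

lemma additive_ydeg: "additive ydeg"
  by (simp add: additive_def ydeg_def lookup_add)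

lemma y_free_iff_homog: "y_free p \<longleftrightarrow> homog ydeg 0 p"
  by (simp add: y_free_def homog_def ydeg_def)

lemma homog_pvar:
  "homog wdeg 1 (pvar X1)" "homog wdeg 1 (pvar X2)" "homog wdeg 1 (pvar X3)" "homog wdeg 2 (pvar Y)"
  "homog ydeg 0 (pvar X1)" "homog ydeg 0 (pvar X2)" "homog ydeg 0 (pvar X3)" "homog ydeg 1 (pvar Y)"
  by (simp_all add: pvar_expo homog_def ydeg_def)

lemma homogeneous_lin_comb:
  "(\<And>u. u \<in> A \<Longrightarrow> homogeneous d (f u)) \<Longrightarrow> homogeneous d (\<Sum>u\<in>A. const (t u) * f u)"
  unfolding homogeneous_iff_homog by (intro homog_sum homog_const_mult[OF additive_wdeg])

lemma homogeneous_0_eq_const: "homogeneous 0 p \<Longrightarrow> p = const (Poly_Mapping.lookup p 0)"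
  by (rule poly_mapping_eqI)
    (auto simp: lookup_const homogeneous_def wdeg_eq_0_iff in_keys_iff)

lemma y_free_quadratic_eq_0:
  assumes "y_free A" "y_free B" "y_free C" "A + B * pvar Y + C * pvar Y ^ 2 = 0"
  shows "A = 0" "B = 0" "C = 0"
proof -
  have hA: "homog ydeg 0 A" using assms by (simp add: y_free_iff_homog)
  have hB: "homog ydeg (0 + 1) (B * pvar Y)"
    using assms by (intro homog_mult[OF additive_ydeg] homog_pvar) (simp add: y_free_iff_homog)
  have hC: "homog ydeg (0 + 2 * 1) (C * pvar Y ^ 2)"
    using assms by (intro homog_mult[OF additive_ydeg] homog_power homog_pvar additive_ydeg)
      (simp add: y_free_iff_homog)
  have "hcomp ydeg k (A + B * pvar Y + C * pvar Y ^ 2) = 0" for k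
    using assms(4) by simp
  from this[of 0] this[of 1] this[of 2] have "A = 0" "B * pvar Y = 0" "C * pvar Y ^ 2 = 0"
    by (simp_all add: hcomp_add hcomp_homog[OF hA] hcomp_homog[OF hB] hcomp_homog[OF hC])
  then show "A = 0" "B = 0" "C = 0"
    unfolding pvar_power_expo(4) by (simp_all add: pvar_expo(4) mult_single_one_eq_0_iff)
qed

section \<open>The Jacobian ideal of $y^3 + g y + h$\<close>

lemma pderiv_var_add: "pderiv_var v (p + q) = pderiv_var v p + pderiv_var v q"
  unfolding pderiv_var_def by (rule setsum_keys_plus_distrib) (simp_all add: distrib_right single_add)

lemma pderiv_var_0 [simp]: "pderiv_var v 0 = 0"
  by (simp add: pderiv_var_def)

lemma pderiv_var_sum: "pderiv_var v (sum f A) = (\<Sum>x\<in>A. pderiv_var v (f x))"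
  by (induction A rule: infinite_finite_induct) (simp_all add: pderiv_var_add)

lemma pderiv_var_single:
  "pderiv_var v (Poly_Mapping.single m c)
     = Poly_Mapping.single (m - Poly_Mapping.single v 1) (c * of_nat (Poly_Mapping.lookup m v))"
  by (cases "c = 0") (simp_all add: pderiv_var_def)

lemma wdeg_single_var: "wdeg (Poly_Mapping.single v 1) = (if v = Y then 2 else 1)"
  by (cases v) (simp_all add: single_var_expo)

lemma pderiv_var_homogeneous:
  assumes "homogeneous d p"
  shows "homogeneous (d - (if v = Y then 2 else 1)) (pderiv_var v p)"
  unfolding pderiv_var_def homogeneous_iff_homog wdeg_single_var[symmetric]
proof (rule homog_sum)
  fix m assume "m \<in> Poly_Mapping.keys p"
  then have "wdeg m = d" using assms by (simp add: homogeneous_def)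
  moreover have "wdeg (m - Poly_Mapping.single v 1) = wdeg m - wdeg (Poly_Mapping.single v 1)"
    if "Poly_Mapping.lookup m v \<noteq> 0"
    using that by (cases v) (simp_all add: wdeg_def lookup_minus lookup_single)
  ultimately show "homog wdeg (d - wdeg (Poly_Mapping.single v 1))
      (Poly_Mapping.single (m - Poly_Mapping.single v 1) (Poly_Mapping.lookup p m * of_nat (Poly_Mapping.lookup m v)))"
    by (metis homog_single mult_zero_right of_nat_0 single_zero homog_0)
qed

lemma pderiv_var_Y_y_free: "y_free g \<Longrightarrow> pderiv_var Y g = 0"
  unfolding pderiv_var_def by (auto simp: y_free_def intro!: sum.neutral)

lemma pderiv_var_Y_mult_Y:
  assumes "y_free g"
  shows "pderiv_var Y (g * pvar Y) = g"
proof -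
  have "pderiv_var Y (g * pvar Y) = (\<Sum>k\<in>Poly_Mapping.keys g.
      pderiv_var Y (Poly_Mapping.single (k + expo 0 0 0 1) (Poly_Mapping.lookup g k)))"
    by (subst poly_mapping_sum_single) (simp add: sum_distrib_right pvar_expo mult_single pderiv_var_sum)
  also have "\<dots> = (\<Sum>k\<in>Poly_Mapping.keys g. Poly_Mapping.single k (Poly_Mapping.lookup g k))"
    using assms by (intro sum.cong) (simp_all add: y_free_def pderiv_var_single lookup_add single_var_expo)
  finally show ?thesis by (simp flip: poly_mapping_sum_single)
qed

definition ycubic :: "mpoly \<Rightarrow> mpoly \<Rightarrow> mpoly" where
  "ycubic g h = pvar Y ^ 3 + g * pvar Y + h"

lemma pderiv_var_Y_ycubic:
  assumes "y_free g" "y_free h"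
  shows "pderiv_var Y (ycubic g h) = const 3 * pvar Y ^ 2 + g"
proof -
  have "expo 0 0 0 3 - Poly_Mapping.single Y 1 = expo 0 0 0 2"
    by (simp add: single_var_expo)
  then have "pderiv_var Y (pvar Y ^ 3) = const 3 * pvar Y ^ 2"
    by (simp add: pvar_power_expo pderiv_var_single const_mult_single)
  then show ?thesis
    using assms by (simp add: ycubic_def pderiv_var_add pderiv_var_Y_mult_Y pderiv_var_Y_y_free)
qed

lemma homogeneous_ycubic:
  assumes "homogeneous 4 g" "homogeneous 6 h"
  shows "homogeneous 6 (ycubic g h)"
  unfolding ycubic_def homogeneous_iff_homog
  using assms homog_power[OF additive_wdeg homog_pvar(4), of 3]
    homog_mult[OF additive_wdeg, of 4 g 2 "pvar Y"] homog_pvar(4)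
  by (intro homog_add) (simp_all add: homogeneous_iff_homog)

definition jac_lincomb :: "mpoly \<Rightarrow> (var \<Rightarrow> mpoly) \<Rightarrow> mpoly" where
  "jac_lincomb F c = c X1 * pderiv_var X1 F + c X2 * pderiv_var X2 F
     + c X3 * pderiv_var X3 F + c Y * pderiv_var Y F"

lemma ideal_range_jac_lincomb: "ideal (range (jac_lincomb F)) mpoly_ring"
proof (rule idealI[OF ring_mpoly_ring])
  interpret ring mpoly_ring by (rule ring_mpoly_ring)
  have "- jac_lincomb F c = jac_lincomb F (\<lambda>v. - c v)"
    and "jac_lincomb F c + jac_lincomb F d = jac_lincomb F (\<lambda>v. c v + d v)" for c d
    by (simp_all add: jac_lincomb_def algebra_simps)
  then show "subgroup (range (jac_lincomb F)) (add_monoid mpoly_ring)"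
    by (intro add.subgroupI) (auto simp del: a_inv_mpoly_ring, simp_all)
next
  fix a x assume "a \<in> range (jac_lincomb F)"
  then obtain c where c: "a = jac_lincomb F c" by auto
  have "x * a = jac_lincomb F (\<lambda>v. x * c v)" "a * x = jac_lincomb F (\<lambda>v. x * c v)"
    by (simp_all add: c jac_lincomb_def algebra_simps)
  then show "x \<otimes>\<^bsub>mpoly_ring\<^esub> a \<in> range (jac_lincomb F)" "a \<otimes>\<^bsub>mpoly_ring\<^esub> x \<in> range (jac_lincomb F)"
    by simp_all
qed

lemma jac_ideal_eq_range: "jac_ideal F = range (jac_lincomb F)"
proof
  interpret ring mpoly_ring by (rule ring_mpoly_ring)
  have "pderiv_var v F = jac_lincomb F (\<lambda>w. if w = v then 1 else 0)" for v
    by (cases v) (simp_all add: jac_lincomb_def)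
  then show "jac_ideal F \<subseteq> range (jac_lincomb F)"
    unfolding jac_ideal_def by (intro genideal_minimal[OF ideal_range_jac_lincomb]) auto
  have I: "ideal (jac_ideal F) mpoly_ring"
    unfolding jac_ideal_def by (rule genideal_ideal) simp
  have "c v * pderiv_var v F \<in> jac_ideal F" for c v
    using ideal.I_l_closed[OF I, of "pderiv_var v F" "c v"] genideal_self[of "range (\<lambda>v. pderiv_var v F)"]
    by (auto simp: jac_ideal_def)
  then show "range (jac_lincomb F) \<subseteq> jac_ideal F"
    unfolding jac_lincomb_def using additive_subgroup.a_closed[OF ideal.axioms(1)[OF I]] by auto
qed

lemma ideal_jac_ideal: "ideal (jac_ideal F) mpoly_ring"
  using jac_ideal_eq_range ideal_range_jac_lincomb by metis

lemma jac_ideal_iff: "p \<in> jac_ideal F \<longleftrightarrow> (\<exists>c. p = jac_lincomb F c)"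
  by (auto simp: jac_ideal_eq_range)

lemma jcoset_eq_iff: "jcoset F p = jcoset F q \<longleftrightarrow> p - q \<in> jac_ideal F"
proof -
  interpret ring mpoly_ring by (rule ring_mpoly_ring)
  show ?thesis
    using quotient_eq_iff_same_a_r_cos[OF ideal_jac_ideal, of p q]
    by (simp add: jcoset_def a_minus_def)
qed

lemma Jac_mult_jcoset: "jcoset F p \<otimes>\<^bsub>Jac F\<^esub> jcoset F q = jcoset F (p * q)"
  using ideal.rcoset_mult_add[OF ideal_jac_ideal, of p q]
  by (simp add: Jac_def FactRing_def jcoset_def)

lemma Jac_add_jcoset: "jcoset F p \<oplus>\<^bsub>Jac F\<^esub> jcoset F q = jcoset F (p + q)"
  using ideal.a_rcos_sum[OF ideal_jac_ideal, of p q]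
  by (simp add: Jac_def FactRing_def jcoset_def)

lemma Jac_one: "\<one>\<^bsub>Jac F\<^esub> = jcoset F 1"
  by (simp add: Jac_def FactRing_def jcoset_def)

lemma Jac_even_simps [simp]:
  "mult (Jac_even F) = mult (Jac F)" "add (Jac_even F) = add (Jac F)" "one (Jac_even F) = one (Jac F)"
  "carrier (Jac_even F) = {jcoset F p | p. even_poly p}"
  by (simp_all add: Jac_even_def)

lemma jcoset_in_carrier: "even_poly p \<Longrightarrow> jcoset F p \<in> carrier (Jac_even F)"
  by auto

lemma hcomp_jac_lincomb:
  assumes "homogeneous k F"
  shows "hcomp wdeg d (jac_lincomb F c) = jac_lincomb F
    (\<lambda>v. if k - (if v = Y then 2 else 1) \<le> d then hcomp wdeg (d - (k - (if v = Y then 2 else 1))) (c v) else 0)"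
proof -
  have "homog wdeg (k - (if v = Y then 2 else 1)) (pderiv_var v F)" for v
    using pderiv_var_homogeneous[OF assms] by (simp only: homogeneous_iff_homog)
  note h = hcomp_mult_homog[OF additive_wdeg this]
  show ?thesis
    unfolding jac_lincomb_def hcomp_add h by simp
qed

lemma hcomp_jac_ideal: "homogeneous k F \<Longrightarrow> p \<in> jac_ideal F \<Longrightarrow> hcomp wdeg d p \<in> jac_ideal F"
  using hcomp_jac_lincomb by (auto simp: jac_ideal_iff)

lemma jac_ideal_low_degree:
  assumes "homogeneous k F" "p \<in> jac_ideal F" "homogeneous d p" "d + 2 < k"
  shows "p = 0"
proof -
  obtain c where c: "p = jac_lincomb F c" using assms(2) by (auto simp: jac_ideal_iff)
  have "p = hcomp wdeg d (jac_lincomb F c)"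
    using assms(3) c by (simp add: hcomp_homog homogeneous_iff_homog)
  moreover have "\<not> k - 1 \<le> d" "\<not> k - 2 \<le> d" using assms(4) by linarith+
  ultimately show ?thesis
    unfolding hcomp_jac_lincomb[OF assms(1)] by (simp add: jac_lincomb_def)
qed

lemma jac_ideal_degree_minus_2:
  assumes "homogeneous k F" "p \<in> jac_ideal F" "homogeneous (k - 2) p" "2 \<le> k"
  shows "\<exists>c. p = const c * pderiv_var Y F"
proof -
  obtain c where c: "p = jac_lincomb F c" using assms(2) by (auto simp: jac_ideal_iff)
  have "\<not> k - 1 \<le> k - 2" using assms(4) by linarith
  have "p = hcomp wdeg (k - 2) (jac_lincomb F c)"
    using assms(3) c by (simp add: hcomp_homog homogeneous_iff_homog)
  also have "\<dots> = hcomp wdeg 0 (c Y) * pderiv_var Y F"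
    using \<open>\<not> k - 1 \<le> k - 2\<close> unfolding hcomp_jac_lincomb[OF assms(1)] by (simp add: jac_lincomb_def)
  also have "hcomp wdeg 0 (c Y) = const (Poly_Mapping.lookup (hcomp wdeg 0 (c Y)) 0)"
    by (rule homogeneous_0_eq_const) (simp add: homogeneous_iff_homog homog_hcomp)
  finally show ?thesis by blast
qed

section \<open>Even polynomials and quadratic monomials\<close>

lemma even_poly_homogeneous: "homogeneous d p \<Longrightarrow> even d \<Longrightarrow> even_poly p"
  by (simp add: homogeneous_def even_poly_def)

lemma even_poly_single: "even (wdeg m) \<Longrightarrow> even_poly (Poly_Mapping.single m c)"
  by (simp add: even_poly_def)

lemma even_poly_0 [simp]: "even_poly 0"
  by (simp add: even_poly_def)

lemma even_poly_const [simp]: "even_poly (const c)"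
  by (simp add: even_poly_def const_def)

lemma even_poly_1 [simp]: "even_poly 1"
  using even_poly_const[of 1] by simp

lemma even_poly_add: "even_poly p \<Longrightarrow> even_poly q \<Longrightarrow> even_poly (p + q)"
  unfolding even_poly_def using keys_add[of p q] by auto

lemma even_poly_mult: "even_poly p \<Longrightarrow> even_poly q \<Longrightarrow> even_poly (p * q)"
  unfolding even_poly_def using keys_mult[of p q] by (fastforce simp: wdeg_add)

lemma even_poly_sum: "(\<And>i. i \<in> A \<Longrightarrow> even_poly (f i)) \<Longrightarrow> even_poly (sum f A)"
  by (induction A rule: infinite_finite_induct) (auto intro: even_poly_add)

lemma even_poly_hcomp: "even_poly p \<Longrightarrow> even_poly (hcomp wdeg d p)"
  unfolding even_poly_def using keys_hcomp[of wdeg d p] by auto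

datatype idx = I1 | I2 | I3

lemma UNIV_idx: "(UNIV :: idx set) = {I1, I2, I3}"
  using idx.exhaust by auto

lemma sum_idx: "(\<Sum>k\<in>UNIV. f k) = f I1 + f I2 + (f I3 :: 'a::comm_monoid_add)"
  by (simp add: UNIV_idx add.assoc)

fun xvar :: "idx \<Rightarrow> var" where
  "xvar I1 = X1" | "xvar I2 = X2" | "xvar I3 = X3"

lemma homogeneous_pvar_xvar: "homogeneous 1 (pvar (xvar k))"
  by (cases k) (simp_all only: xvar.simps homogeneous_iff_homog homog_pvar)

datatype mono2 = M11 | M22 | M33 | M12 | M13 | M23 | MY

lemma UNIV_mono2: "(UNIV :: mono2 set) = {M11, M22, M33, M12, M13, M23, MY}"
  using mono2.exhaust by auto

instance mono2 :: finite
  by standard (simp add: UNIV_mono2)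

lemma sum_mono2:
  "(\<Sum>u\<in>UNIV. f u) = f M11 + f M22 + f M33 + f M12 + f M13 + f M23 + (f MY :: 'a::comm_monoid_add)"
  by (simp add: UNIV_mono2 add.assoc)

fun exp2 :: "mono2 \<Rightarrow> (var \<Rightarrow>\<^sub>0 nat)" where
  "exp2 M11 = expo 2 0 0 0" | "exp2 M22 = expo 0 2 0 0" | "exp2 M33 = expo 0 0 2 0"
| "exp2 M12 = expo 1 1 0 0" | "exp2 M13 = expo 1 0 1 0" | "exp2 M23 = expo 0 1 1 0" | "exp2 MY = expo 0 0 0 1"

definition mon2 :: "mono2 \<Rightarrow> mpoly" where
  "mon2 u = Poly_Mapping.single (exp2 u) 1"

fun mxx :: "idx \<Rightarrow> idx \<Rightarrow> mono2" where
  "mxx I1 I1 = M11" | "mxx I2 I2 = M22" | "mxx I3 I3 = M33"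
| "mxx I1 I2 = M12" | "mxx I2 I1 = M12" | "mxx I1 I3 = M13" | "mxx I3 I1 = M13"
| "mxx I2 I3 = M23" | "mxx I3 I2 = M23"

lemma mxx_commute: "mxx i j = mxx j i"
  by (cases i; cases j; simp)

lemma mxx_neq_MY [simp]: "mxx i j \<noteq> MY"
  by (cases i; cases j; simp)

lemma mono2_cases_mxx: "u \<noteq> MY \<Longrightarrow> \<exists>i j. u = mxx i j"
  by (cases u) (auto intro: mxx.simps[symmetric])

lemma inj_exp2: "inj exp2"
  unfolding inj_def by (intro allI; case_tac x; case_tac y; simp)

lemma wdeg_exp2 [simp]: "wdeg (exp2 u) = 2"
  by (cases u) simp_all

lemma mon2_simps:
  "mon2 M11 = pvar X1 ^ 2" "mon2 M22 = pvar X2 ^ 2" "mon2 M33 = pvar X3 ^ 2"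
  "mon2 M12 = pvar X1 * pvar X2" "mon2 M13 = pvar X1 * pvar X3" "mon2 M23 = pvar X2 * pvar X3"
  "mon2 MY = pvar Y"
  by (simp_all only: mon2_def pvar_power_expo exp2.simps) (simp_all add: pvar_expo mult_single)

lemma mon2_mxx: "mon2 (mxx i j) = pvar (xvar i) * pvar (xvar j)"
  by (cases i; cases j) (simp_all add: mon2_simps power2_eq_square mult.commute)

lemma homogeneous_mon2: "homogeneous 2 (mon2 u)"
  by (simp add: mon2_def homogeneous_def)

lemma even_poly_mon2: "even_poly (mon2 u)"
  by (rule even_poly_homogeneous[OF homogeneous_mon2]) simp

lemma y_free_mon2: "u \<noteq> MY \<Longrightarrow> y_free (mon2 u)"
  by (cases u) (simp_all add: y_free_def mon2_def)

text \<open>The even part of the polynomial ring is generated by the quadratic monomials.\<close>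

lemma even_exponent_split:
  assumes "m \<noteq> 0" "even (wdeg m)"
  obtains u m' where "m = m' + exp2 u"
proof -
  define a b c d where "a = Poly_Mapping.lookup m X1" "b = Poly_Mapping.lookup m X2"
    "c = Poly_Mapping.lookup m X3" "d = Poly_Mapping.lookup m Y"
  have m: "m = expo a b c d" unfolding a_b_c_d_def by (rule expo_lookup)
  have "d \<ge> 1 \<or> a \<ge> 2 \<or> b \<ge> 2 \<or> c \<ge> 2 \<or> a \<ge> 1 \<and> b \<ge> 1 \<or> a \<ge> 1 \<and> c \<ge> 1 \<or> b \<ge> 1 \<and> c \<ge> 1"
  proof (rule ccontr)
    assume "\<not> ?thesis"
    then have "d = 0" "a \<le> 1" "b \<le> 1" "c \<le> 1" "a = 0 \<or> b = 0" "a = 0 \<or> c = 0" "b = 0 \<or> c = 0"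
      by auto
    moreover have "a + b + c + d > 0" "even (a + b + c + 2 * d)"
      using assms by (auto simp: m simp flip: expo_0)
    ultimately show False by auto
  qed
  then show ?thesis
    using that[of "expo a b c (d - 1)" MY] that[of "expo (a - 2) b c d" M11]
      that[of "expo a (b - 2) c d" M22] that[of "expo a b (c - 2) d" M33]
      that[of "expo (a - 1) (b - 1) c d" M12] that[of "expo (a - 1) b (c - 1) d" M13]
      that[of "expo a (b - 1) (c - 1) d" M23]
    by (auto simp: m)
qed

lemma wdeg_eq_2_iff: "wdeg m = 2 \<longleftrightarrow> m \<in> range exp2"
proof
  assume m: "wdeg m = 2"
  moreover have "m \<noteq> 0" using m by auto
  ultimately obtain u m' where "m = m' + exp2 u"
    by (metis even_exponent_split even_numeral)
  moreover from this have "m' = 0" using m by (simp add: wdeg_add wdeg_eq_0_iff[symmetric])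
  ultimately show "m \<in> range exp2" by simp
qed auto

definition coeff2 :: "mpoly \<Rightarrow> mono2 \<Rightarrow> complex" where
  "coeff2 p u = Poly_Mapping.lookup p (exp2 u)"

lemma coeff2_lin_comb_mon2 [simp]: "coeff2 (\<Sum>u\<in>UNIV. const (t u) * mon2 u) v = t v"
  using inj_exp2 by (simp add: coeff2_def lookup_sum mon2_def const_mult_single lookup_single when_def inj_eq)

lemma coeff2_lin_comb: "coeff2 (\<Sum>u\<in>UNIV. const (t u) * f u) v = (\<Sum>u\<in>UNIV. t u * coeff2 (f u) v)"
  by (simp add: coeff2_def lookup_sum lookup_const_mult)

lemma coeff2_mon2: "coeff2 (mon2 u) v = (if v = u then 1 else 0)"
  using inj_exp2 by (simp add: coeff2_def mon2_def lookup_single when_def inj_eq)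

lemma homogeneous_2_expand: "homogeneous 2 p \<Longrightarrow> p = (\<Sum>u\<in>UNIV. const (coeff2 p u) * mon2 u)"
proof -
  assume "homogeneous 2 p"
  then have "p = (\<Sum>m\<in>range exp2. Poly_Mapping.single m (Poly_Mapping.lookup p m))"
    by (intro poly_mapping_sum_single_superset) (auto simp: homogeneous_def simp flip: wdeg_eq_2_iff)
  then show ?thesis
    by (simp add: sum.reindex[OF inj_exp2] coeff2_def mon2_def const_mult_single)
qed

lemma lin_comb_mon2_eq_0: "(\<Sum>u\<in>UNIV. const (t u) * mon2 u) = 0 \<Longrightarrow> t u = 0"
  using coeff2_lin_comb_mon2[of t u] by (simp add: coeff2_def)

lemma homogeneous_lin_comb_mon2: "homogeneous 2 (\<Sum>u\<in>UNIV. const (t u) * mon2 u)"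
  by (rule homogeneous_lin_comb) (rule homogeneous_mon2)

lemma mon2_veronese:
  "mon2 M11 * mon2 M22 = mon2 M12 * mon2 M12" "mon2 M11 * mon2 M33 = mon2 M13 * mon2 M13"
  "mon2 M22 * mon2 M33 = mon2 M23 * mon2 M23" "mon2 M11 * mon2 M23 = mon2 M12 * mon2 M13"
  "mon2 M22 * mon2 M13 = mon2 M12 * mon2 M23" "mon2 M33 * mon2 M12 = mon2 M13 * mon2 M23"
  by (simp_all add: mon2_def mult_single)

section \<open>Symmetric $3 \times 3$ matrices of rank one\<close>

lemma quartic_eq_0_imp:
  fixes c0 c1 c2 c3 c4 :: "'a::field_char_0"
  assumes "\<And>t. c0 + c1 * t + c2 * t ^ 2 + c3 * t ^ 3 + c4 * t ^ 4 = 0"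
  shows "c0 = 0 \<and> c1 = 0 \<and> c2 = 0 \<and> c3 = 0 \<and> c4 = 0"
proof -
  define P where "P t = c0 + c1 * t + c2 * t ^ 2 + c3 * t ^ 3 + c4 * t ^ 4" for t :: 'a
  text \<open>Solve the Vandermonde system for the values at \<open>0, \<plusminus>1, \<plusminus>2\<close>.\<close>
  have "c0 = P 0" "12 * c1 = - P 2 + P (- 2) + 8 * P 1 - 8 * P (- 1)"
    "24 * c2 = - P 2 - P (- 2) + 16 * P 1 + 16 * P (- 1) - 30 * P 0"
    "12 * c3 = P 2 - P (- 2) - 2 * P 1 + 2 * P (- 1)"
    "24 * c4 = P 2 + P (- 2) - 4 * P 1 - 4 * P (- 1) + 6 * P 0"
    by (simp_all add: P_def algebra_simps power_numeral_reduce)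
  moreover have "P t = 0" for t unfolding P_def by (rule assms)
  ultimately show ?thesis by simp
qed

type_synonym vec3 = "idx \<Rightarrow> complex"
type_synonym mat3 = "idx \<Rightarrow> idx \<Rightarrow> complex"

definition outer :: "vec3 \<Rightarrow> mat3" where
  "outer x i j = x i * x j"

definition sym_prod :: "vec3 \<Rightarrow> vec3 \<Rightarrow> mat3" where
  "sym_prod x y i j = x i * y j + y i * x j"

definition wedge :: "vec3 \<Rightarrow> vec3 \<Rightarrow> mat3" where
  "wedge x y i j = x i * y j - x j * y i"

definition minor2 :: "mat3 \<Rightarrow> idx \<Rightarrow> idx \<Rightarrow> idx \<Rightarrow> idx \<Rightarrow> complex" where
  "minor2 X i j m n = X i m * X j n - X i n * X j m"

text \<open>The bilinear form whose diagonal is \<^const>\<open>minor2\<close>.\<close>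

definition polar2 :: "mat3 \<Rightarrow> mat3 \<Rightarrow> idx \<Rightarrow> idx \<Rightarrow> idx \<Rightarrow> idx \<Rightarrow> complex" where
  "polar2 X Z i j m n = X i m * Z j n + Z i m * X j n - X i n * Z j m - Z i n * X j m"

lemma minor2_pencil:
  "minor2 (\<lambda>i j. M i j + t * R i j + t ^ 2 * S i j) i j m n
   = minor2 M i j m n + polar2 M R i j m n * t + (polar2 M S i j m n + minor2 R i j m n) * t ^ 2
     + polar2 R S i j m n * t ^ 3 + minor2 S i j m n * t ^ 4"
  by (simp add: minor2_def polar2_def algebra_simps power2_eq_square power3_eq_cube power4_eq_xxxx)

lemma pencil_minor2_eq_0:
  assumes "\<And>t. minor2 (\<lambda>i j. M i j + t * R i j + t ^ 2 * S i j) i j m n = 0"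
  shows "polar2 M R i j m n = 0" "polar2 M S i j m n + minor2 R i j m n = 0"
    "polar2 R S i j m n = 0" "minor2 S i j m n = 0"
  using quartic_eq_0_imp[of "minor2 M i j m n" "polar2 M R i j m n"
      "polar2 M S i j m n + minor2 R i j m n" "polar2 R S i j m n" "minor2 S i j m n"]
    assms[unfolded minor2_pencil]
  by (simp_all add: algebra_simps)

lemma minor2_sym_prod: "minor2 (sym_prod u a) i j m n = - polar2 (outer u) (outer a) i j m n"
  by (simp add: minor2_def sym_prod_def polar2_def outer_def algebra_simps)

lemma polar2_sym_prod:
  "polar2 (sym_prod u a) (\<lambda>i j. outer a i j + sym_prod u w i j) i j m n
   = wedge u w i j * wedge a u m n + wedge a u i j * wedge u w m n"
  by (simp add: sym_prod_def polar2_def outer_def wedge_def algebra_simps)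

lemma minor2_outer_add_sym_prod:
  "minor2 (\<lambda>i j. outer a i j + sym_prod u w i j) i j m n
   = wedge a u i j * wedge a w m n + wedge a w i j * wedge a u m n - wedge u w i j * wedge u w m n"
  by (simp add: minor2_def sym_prod_def outer_def wedge_def algebra_simps)

lemma polar2_outer_eq_0_imp:
  assumes "u r \<noteq> 0" "\<And>i j. X i j = X j i" "\<And>i j m n. polar2 (outer u) X i j m n = 0"
  shows "X = sym_prod u (\<lambda>j. (X r j - u j * X r r / (2 * u r)) / u r)"
proof (intro ext)
  fix i j
  have "u r * u r * X i j = u r * u j * X r i + X r j * u i * u r - X r r * u i * u j"
    using assms(3)[of i r j r] assms(2)[of i r] by (simp add: polar2_def outer_def algebra_simps)
  then have x: "X i j = (u r * u j * X r i + X r j * u i * u r - X r r * u i * u j) / (u r * u r)"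
    using assms(1) by (simp add: eq_divide_eq mult.commute)
  show "X i j = sym_prod u (\<lambda>j. (X r j - u j * X r r / (2 * u r)) / u r) i j"
    by (subst x) (use assms(1) in \<open>simp add: sym_prod_def field_simps\<close>)
qed

lemma sym_tensor_eq_0_imp:
  fixes X Z :: mat3
  assumes "\<And>i j m n. X i j * Z m n + Z i j * X m n = 0"
  shows "(\<forall>i j. X i j = 0) \<or> (\<forall>i j. Z i j = 0)"
proof (rule ccontr)
  assume "\<not> ?thesis"
  then obtain i j k l where X: "X i j \<noteq> 0" and Z: "Z k l \<noteq> 0" by blast
  have "Z i j = 0" using assms[of i j i j] X by simp
  then show False using assms[of i j k l] X Z by simp
qed

lemma wedge_eq_0_imp_parallel:
  assumes "\<And>i j. wedge x u i j = 0" "u r \<noteq> 0"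
  shows "x i = (x r / u r) * u i"
  using assms(1)[of i r] assms(2) by (simp add: wedge_def field_simps)

lemma wedge_commute: "wedge x y i j = - wedge y x i j"
  by (simp add: wedge_def)

lemma wedge_relations_cases:
  assumes u: "u r \<noteq> 0"
    and h3: "\<And>i j m n. wedge u w i j * wedge a u m n + wedge a u i j * wedge u w m n = 0"
    and h4: "\<And>i j m n. wedge a u i j * wedge a w m n + wedge a w i j * wedge a u m n
                 - wedge u w i j * wedge u w m n = 0"
  shows "(\<forall>i. w i = 0) \<or> (\<forall>i j. wedge a u i j = 0 \<and> wedge u w i j = 0)"
proof (cases "\<forall>i j. wedge a u i j = 0")
  case True
  then have "wedge u w i j * wedge u w i j = 0" for i j using h4[of i j i j] by simp
  then show ?thesis using True by simp
next
  case False
  have "(\<forall>i j. wedge u w i j = 0) \<or> (\<forall>i j. wedge a u i j = 0)"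
    by (rule sym_tensor_eq_0_imp) (rule h3)
  then have uw: "wedge u w i j = 0" for i j using False by blast
  then have wu: "wedge w u i j = 0" for i j by (simp add: wedge_commute[of w u])
  define \<beta> where "\<beta> = w r / u r"
  have w: "w = (\<lambda>i. \<beta> * u i)"
    unfolding \<beta>_def by (rule ext) (rule wedge_eq_0_imp_parallel[OF wu u])
  obtain i j where ij: "wedge a u i j \<noteq> 0" using False by blast
  have "2 * \<beta> * (wedge a u i j * wedge a u i j) = 0"
    using h4[of i j i j] uw[of i j] by (simp add: w wedge_def algebra_simps)
  then have "\<beta> = 0" using ij by simp
  then show ?thesis using w by simp
qed

text \<open>The \<open>2 \<times> 2\<close> minors of the pencil vanish identically in \<open>t\<close>; comparing coefficients
  determines first \<open>R\<close> and then \<open>S\<close>.\<close>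

lemma rank_one_pencil:
  fixes u :: vec3 and R S :: mat3
  assumes u: "u r \<noteq> 0" and R: "\<And>i j. R i j = R j i" and S: "\<And>i j. S i j = S j i"
    and pencil: "\<And>t i j m n. minor2 (\<lambda>i j. outer u i j + t * R i j + t ^ 2 * S i j) i j m n = 0"
  defines "a \<equiv> \<lambda>j. (R r j - u j * R r r / (2 * u r)) / u r"
  shows "S = outer a \<or> (\<exists>\<kappa> \<zeta>. R = (\<lambda>i j. \<kappa> * outer u i j) \<and> S = (\<lambda>i j. \<zeta> * outer u i j))"
proof -
  note h = pencil_minor2_eq_0[OF pencil]
  have Ra: "R = sym_prod u a"
    unfolding a_def by (rule polar2_outer_eq_0_imp[OF u R h(1)])
  define D where "D i j = S i j - outer a i j" for i j
  have "polar2 (outer u) D i j m n = 0" for i j m n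
    using h(2)[of i j m n] minor2_sym_prod[of u a i j m n]
    by (simp add: Ra D_def polar2_def outer_def algebra_simps)
  moreover have "D i j = D j i" for i j using S[of i j] by (simp add: D_def outer_def mult.commute)
  ultimately obtain w where "D = sym_prod u w"
    using polar2_outer_eq_0_imp[of u r D, OF u] by blast
  moreover have "S = (\<lambda>i j. outer a i j + D i j)"
    by (simp add: D_def)
  ultimately have Sw: "S = (\<lambda>i j. outer a i j + sym_prod u w i j)"
    by simp
  from wedge_relations_cases[of u r w a, OF u]
  have "(\<forall>i. w i = 0) \<or> (\<forall>i j. wedge a u i j = 0 \<and> wedge u w i j = 0)"
    using h(3) h(4) by (simp add: Ra Sw polar2_sym_prod minor2_outer_add_sym_prod)
  then show ?thesis
  proof
    assume "\<forall>i. w i = 0"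
    then show ?thesis by (simp add: Sw sym_prod_def)
  next
    assume *: "\<forall>i j. wedge a u i j = 0 \<and> wedge u w i j = 0"
    then have au: "wedge a u i j = 0" and wu: "wedge w u i j = 0" for i j
      by (simp_all add: wedge_commute[of w u])
    define \<alpha> \<beta> where "\<alpha> = a r / u r" and "\<beta> = w r / u r"
    have "a = (\<lambda>i. \<alpha> * u i)" "w = (\<lambda>i. \<beta> * u i)"
      unfolding \<alpha>_def \<beta>_def by (rule ext, rule wedge_eq_0_imp_parallel[OF au u],
          rule ext, rule wedge_eq_0_imp_parallel[OF wu u])
    then have "R = (\<lambda>i j. (2 * \<alpha>) * outer u i j)" "S = (\<lambda>i j. (\<alpha> * \<alpha> + 2 * \<beta>) * outer u i j)"
      by (simp_all add: Ra Sw sym_prod_def outer_def fun_eq_iff algebra_simps)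
    then show ?thesis by blast
  qed
qed

lemma sym_rank_one_eq_outer:
  fixes M :: mat3
  assumes "\<And>i j. M i j = M j i" "\<And>i j m n. minor2 M i j m n = 0" "M i0 j0 \<noteq> 0"
  obtains u r where "u r \<noteq> 0" "M = outer u"
proof (cases "\<exists>r. M r r \<noteq> 0")
  case True
  then obtain r where r: "M r r \<noteq> 0" by blast
  define c where "c = csqrt (M r r)"
  have c2: "c * c = M r r" by (simp add: c_def flip: power2_eq_square)
  then have c0: "c \<noteq> 0" using r by auto
  show ?thesis
  proof (rule that[of "\<lambda>i. M r i / c" r])
    show "M r r / c \<noteq> 0" using r c0 by simp
    show "M = outer (\<lambda>i. M r i / c)"
    proof (intro ext)
      fix i j
      have "M i j * M r r = M r i * M r j"
        using assms(2)[of r i r j] assms(1)[of i r] by (simp add: minor2_def algebra_simps)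
      then show "M i j = outer (\<lambda>i. M r i / c) i j"
        using r by (simp add: outer_def eq_divide_eq flip: c2)
    qed
  qed
next
  case False
  then show ?thesis
    using assms(2)[of i0 j0 i0 j0] assms(3) assms(1)[of j0 i0] by (simp add: minor2_def)
qed

section \<open>Matrices of quadratic forms of rank one\<close>

definition mulv :: "mat3 \<Rightarrow> vec3 \<Rightarrow> vec3" where
  "mulv A x i = (\<Sum>k\<in>UNIV. A i k * x k)"

definition unit_vec :: "idx \<Rightarrow> vec3" where
  "unit_vec k l = (if l = k then 1 else 0)"

lemma mulv_add: "mulv A (\<lambda>m. x m + y m) i = mulv A x i + mulv A y i"
  by (simp add: mulv_def distrib_left sum.distrib)

lemma mulv_unit_vec [simp]: "mulv A (unit_vec k) i = A i k"
  by (cases k) (simp_all add: mulv_def sum_idx unit_vec_def)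

text \<open>Value of a quadratic monomial at the point \<open>(x, 0)\<close>.\<close>

fun mval :: "mono2 \<Rightarrow> vec3 \<Rightarrow> complex" where
  "mval M11 x = x I1 * x I1" | "mval M22 x = x I2 * x I2" | "mval M33 x = x I3 * x I3"
| "mval M12 x = x I1 * x I2" | "mval M13 x = x I1 * x I3" | "mval M23 x = x I2 * x I3"
| "mval MY x = 0"

lemma mval_mxx: "mval (mxx k l) x = x k * x l"
  by (cases k; cases l; simp add: mult.commute)

lemma mval_line:
  "mval b (\<lambda>k. x k + t * y k)
     = mval b x + t * (mval b (\<lambda>k. x k + y k) - mval b x - mval b y) + t ^ 2 * mval b y"
  by (cases b) (simp_all add: algebra_simps power2_eq_square)

lemma mval_unit_vec: "mval b (unit_vec k) = (if b = mxx k k then 1 else 0)"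
  by (cases b; cases k; simp add: unit_vec_def)

lemma mval_unit_vec_add:
  "k \<noteq> l \<Longrightarrow> mval b (\<lambda>m. unit_vec k m + unit_vec l m)
     = (if b = mxx k k then 1 else 0) + (if b = mxx l l then 1 else 0) + (if b = mxx k l then 1 else 0)"
  by (cases b; cases k; cases l; simp add: unit_vec_def)

text \<open>The directional derivative of \<^const>\<open>mval\<close> at the first unit vector.\<close>

definition dmval :: "mono2 \<Rightarrow> vec3 \<Rightarrow> complex" where
  "dmval b p = mval b (\<lambda>k. unit_vec I1 k + p k) - mval b (unit_vec I1) - mval b p"

lemma dmval_simps:
  "dmval M11 p = 2 * p I1" "dmval M12 p = p I2" "dmval M13 p = p I3"
  by (simp_all add: dmval_def unit_vec_def algebra_simps)

lemma dmval_linear: "dmval b p = (\<Sum>k\<in>UNIV. p k * dmval b (unit_vec k))"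
  by (cases b) (simp_all add: dmval_def unit_vec_def sum_idx algebra_simps)

definition xmonos :: "mono2 set" where
  "xmonos = {u. u \<noteq> MY}"

lemma in_xmonos_iff [simp]: "u \<in> xmonos \<longleftrightarrow> u \<noteq> MY"
  by (simp add: xmonos_def)

lemma sum_UNIV_mono2: "(\<Sum>b\<in>UNIV. f b) = f MY + sum f xmonos"
proof -
  have U: "UNIV = insert MY xmonos" by auto
  show ?thesis unfolding U by simp
qed

lemma sum_xmonos:
  "sum f xmonos = f M11 + f M22 + f M33 + f M12 + f M13 + (f M23 :: 'a::comm_monoid_add)"
proof -
  have X: "xmonos = {M11, M22, M33, M12, M13, M23}"
    unfolding xmonos_def using mono2.exhaust by auto
  show ?thesis unfolding X by (simp add: add.assoc)
qed

lemma sum_xmonos_delta [simp]: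
  assumes "b \<in> xmonos"
  shows "(\<Sum>b'\<in>xmonos. f b' * (if b' = b then 1 else 0)) = (f b :: complex)"
proof -
  have "(\<Sum>b'\<in>xmonos. f b' * (if b' = b then 1 else 0)) = (\<Sum>b'\<in>xmonos. if b' = b then f b' else 0)"
    by (rule sum.cong) auto
  then show ?thesis using assms by simp
qed

text \<open>A symmetric matrix \<open>Q\<close> of quadratic forms in \<open>x\<^sub>1, x\<^sub>2, x\<^sub>3\<close>, given by its coefficient matrix \<open>B\<close>,
  of rank at most one everywhere and with linearly independent entries.\<close>

locale rank_one_quadrics =
  fixes B :: "mono2 \<Rightarrow> mono2 \<Rightarrow> complex"
  assumes rank_le_one: "\<And>x i j m n. minor2 (\<lambda>i j. \<Sum>b\<in>xmonos. B (mxx i j) b * mval b x) i j m n = 0"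
    and independent: "\<And>c b. (\<And>w. w \<in> xmonos \<Longrightarrow> (\<Sum>b'\<in>xmonos. B w b' * c b') = 0) \<Longrightarrow> b \<in> xmonos \<Longrightarrow> c b = 0"
begin

definition Q :: "vec3 \<Rightarrow> mat3" where
  "Q x i j = (\<Sum>b\<in>xmonos. B (mxx i j) b * mval b x)"

lemma Q_commute: "Q x i j = Q x j i"
  by (simp add: Q_def mxx_commute[of i j])

lemma minor2_Q: "minor2 (Q x) i j m n = 0"
  using rank_le_one by (simp add: Q_def[abs_def])

lemma Q_line:
  "Q (\<lambda>k. x k + t * y k) i j
     = Q x i j + t * (Q (\<lambda>k. x k + y k) i j - Q x i j - Q y i j) + t ^ 2 * Q y i j"
  unfolding Q_def mval_line by (simp add: sum.distrib sum_subtractf sum_distrib_left algebra_simps)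

lemma independent_mxx:
  assumes "\<And>i j. (\<Sum>b\<in>xmonos. B (mxx i j) b * c b) = 0" "b \<in> xmonos"
  shows "c b = 0"
proof (rule independent[OF _ assms(2)])
  fix w assume "w \<in> xmonos"
  then obtain i j where "w = mxx i j" using mono2_cases_mxx[of w] by auto
  then show "(\<Sum>b'\<in>xmonos. B w b' * c b') = 0" using assms(1) by simp
qed

definition M :: mat3 where
  "M = Q (unit_vec I1)"

lemma M_eq: "M i j = B (mxx i j) M11"
  by (simp add: M_def Q_def mval_unit_vec cong: if_cong)

lemma M_nonzero: "\<exists>i j. M i j \<noteq> 0"
proof (rule ccontr)
  assume "\<not> ?thesis"
  then have "(\<Sum>b\<in>xmonos. B (mxx i j) b * (if b = M11 then 1 else 0)) = 0" for i j
    by (simp add: M_eq)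
  from independent_mxx[OF this, of M11] show False by simp
qed

lemma obtain_outer:
  obtains u r where "u r \<noteq> 0" "M = outer u"
proof -
  obtain i j where "M i j \<noteq> 0" using M_nonzero by blast
  then show ?thesis
    by (rule sym_rank_one_eq_outer[of M, rotated 2]) (auto simp: M_def Q_commute minor2_Q intro: that)
qed

end

locale rank_one_quadrics_outer = rank_one_quadrics +
  fixes u :: vec3 and r :: idx
  assumes u_r: "u r \<noteq> 0" and M_outer: "M = outer u"
begin

definition R :: "vec3 \<Rightarrow> mat3" where
  "R p i j = Q (\<lambda>k. unit_vec I1 k + p k) i j - M i j - Q p i j"

lemma R_eq: "R p i j = (\<Sum>b\<in>xmonos. B (mxx i j) b * dmval b p)"
  unfolding R_def M_def Q_def dmval_def by (simp add: sum_subtractf sum.distrib algebra_simps)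

lemma R_linear: "R p i j = (\<Sum>k\<in>UNIV. p k * R (unit_vec k) i j)"
  unfolding R_eq by (subst dmval_linear)
    (simp add: sum_distrib_left sum_distrib_right sum.swap[of _ UNIV xmonos] algebra_simps)

lemma R_commute: "R p i j = R p j i"
  by (simp add: R_def Q_commute M_def)

lemma minor2_pencil_Q: "minor2 (\<lambda>i j. outer u i j + t * R p i j + t ^ 2 * Q p i j) i j m n = 0"
proof -
  have "(\<lambda>i j. outer u i j + t * R p i j + t ^ 2 * Q p i j) = Q (\<lambda>k. unit_vec I1 k + t * p k)"
    by (auto simp: fun_eq_iff Q_line R_def M_def simp flip: M_outer)
  then show ?thesis by (simp add: minor2_Q)
qed

definition a :: "vec3 \<Rightarrow> vec3" where
  "a p j = (R p r j - u j * R p r r / (2 * u r)) / u r"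

text \<open>If the linear term of the pencil is a multiple of \<open>u u\<^sup>T\<close>, independence forces \<open>p\<close> to be a
  multiple of the first unit vector, where the claim is obvious.\<close>

lemma Q_eq_outer_degenerate:
  assumes R: "R p = (\<lambda>i j. \<kappa> * outer u i j)"
  shows "Q p = outer (a p)"
proof -
  have "(\<Sum>b\<in>xmonos. B (mxx i j) b * (dmval b p - (if b = M11 then \<kappa> else 0))) = 0" for i j
  proof -
    have "R p i j = \<kappa> * M i j" using R M_outer by (simp add: outer_def)
    then have "(\<Sum>b\<in>xmonos. B (mxx i j) b * dmval b p) = \<kappa> * B (mxx i j) M11"
      by (simp add: R_eq M_eq)
    moreover have "(\<Sum>b\<in>xmonos. B (mxx i j) b * (if b = M11 then \<kappa> else 0))
        = (\<Sum>b\<in>xmonos. if b = M11 then \<kappa> * B (mxx i j) b else 0)"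
      by (rule sum.cong) auto
    ultimately show ?thesis
      by (simp add: right_diff_distrib sum_subtractf)
  qed
  from independent_mxx[OF this]
  have "dmval b p = (if b = M11 then \<kappa> else 0)" if "b \<noteq> MY" for b
    using that by simp
  from this[of M12] this[of M13] this[of M11]
  have p: "p I2 = 0" "p I3 = 0" "\<kappa> = 2 * p I1" by (simp_all add: dmval_simps)
  have "mval b p = p I1 * p I1 * mval b (unit_vec I1)" for b
    using p by (cases b) (simp_all add: unit_vec_def)
  then have "Q p = (\<lambda>i j. p I1 * p I1 * M i j)"
    by (simp add: fun_eq_iff M_def Q_def sum_distrib_left algebra_simps)
  moreover have "a p j = p I1 * u j" for j
    using u_r by (simp add: a_def R p outer_def field_simps)
  ultimately show ?thesis by (simp add: M_outer outer_def fun_eq_iff algebra_simps)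
qed

lemma Q_eq_outer: "Q p = outer (a p)"
proof -
  have a: "a p = (\<lambda>j. (R p r j - u j * R p r r / (2 * u r)) / u r)"
    by (simp add: fun_eq_iff a_def)
  from rank_one_pencil[OF u_r R_commute Q_commute minor2_pencil_Q]
  show ?thesis
  proof
    assume "Q p = outer (\<lambda>j. (R p r j - u j * R p r r / (2 * u r)) / u r)"
    then show ?thesis by (simp add: a)
  next
    assume "\<exists>\<kappa> \<zeta>. R p = (\<lambda>i j. \<kappa> * outer u i j) \<and> Q p = (\<lambda>i j. \<zeta> * outer u i j)"
    then show ?thesis using Q_eq_outer_degenerate by blast
  qed
qed

definition A :: mat3 where
  "A i k = a (unit_vec k) i"

lemma a_eq_mulv: "a p = mulv A p"
  unfolding A_def a_def mulv_def fun_eq_iff using u_r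
  by (subst (1 2) R_linear) (simp add: sum_idx field_simps)

lemma Q_eq_mulv: "Q x i j = mulv A x i * mulv A x j"
  using Q_eq_outer[of x] by (simp add: outer_def a_eq_mulv)

lemma mulv_A_eq_0: "(\<And>i. mulv A x i = 0) \<Longrightarrow> x k = 0"
  using independent_mxx[of "\<lambda>b. mval b x" "mxx k k"] by (simp add: Q_def[symmetric] Q_eq_mulv mval_mxx)

end

context rank_one_quadrics
begin

theorem factorization:
  obtains A where "\<And>x i j. Q x i j = mulv A x i * mulv A x j" "\<And>x k. (\<And>i. mulv A x i = 0) \<Longrightarrow> x k = 0"
proof -
  obtain u r where "u r \<noteq> 0" "M = outer u" by (rule obtain_outer)
  then interpret rank_one_quadrics_outer B u r by unfold_locales
  show ?thesis using that Q_eq_mulv mulv_A_eq_0 by blast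
qed

end

section \<open>Inverting $3 \times 3$ matrices\<close>

definition det3 :: "mat3 \<Rightarrow> complex" where
  "det3 A = A I1 I1 * (A I2 I2 * A I3 I3 - A I2 I3 * A I3 I2)
     - A I1 I2 * (A I2 I1 * A I3 I3 - A I2 I3 * A I3 I1)
     + A I1 I3 * (A I2 I1 * A I3 I2 - A I2 I2 * A I3 I1)"

fun adj3 :: "mat3 \<Rightarrow> mat3" where
  "adj3 A I1 I1 = A I2 I2 * A I3 I3 - A I2 I3 * A I3 I2"
| "adj3 A I1 I2 = A I1 I3 * A I3 I2 - A I1 I2 * A I3 I3"
| "adj3 A I1 I3 = A I1 I2 * A I2 I3 - A I1 I3 * A I2 I2"
| "adj3 A I2 I1 = A I2 I3 * A I3 I1 - A I2 I1 * A I3 I3"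
| "adj3 A I2 I2 = A I1 I1 * A I3 I3 - A I1 I3 * A I3 I1"
| "adj3 A I2 I3 = A I1 I3 * A I2 I1 - A I1 I1 * A I2 I3"
| "adj3 A I3 I1 = A I2 I1 * A I3 I2 - A I2 I2 * A I3 I1"
| "adj3 A I3 I2 = A I1 I2 * A I3 I1 - A I1 I1 * A I3 I2"
| "adj3 A I3 I3 = A I1 I1 * A I2 I2 - A I1 I2 * A I2 I1"

lemma mult_adj3: "(\<Sum>k\<in>UNIV. A i k * adj3 A k j) = (if i = j then det3 A else 0)"
  by (cases i; cases j) (simp_all add: sum_idx det3_def algebra_simps)

lemma adj3_mult: "(\<Sum>k\<in>UNIV. adj3 A i k * A k j) = (if i = j then det3 A else 0)"
  by (cases i; cases j) (simp_all add: sum_idx det3_def algebra_simps)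

lemma adj3_eq_0_imp_minor:
  assumes "\<And>i j. adj3 A i j = 0"
  shows "A j k * A i l = A j l * A i k"
proof -
  have "A I2 I2 * A I3 I3 = A I2 I3 * A I3 I2" "A I1 I3 * A I3 I2 = A I1 I2 * A I3 I3"
    "A I1 I2 * A I2 I3 = A I1 I3 * A I2 I2" "A I2 I3 * A I3 I1 = A I2 I1 * A I3 I3"
    "A I1 I1 * A I3 I3 = A I1 I3 * A I3 I1" "A I1 I3 * A I2 I1 = A I1 I1 * A I2 I3"
    "A I2 I1 * A I3 I2 = A I2 I2 * A I3 I1" "A I1 I2 * A I3 I1 = A I1 I1 * A I3 I2"
    "A I1 I1 * A I2 I2 = A I1 I2 * A I2 I1"
    using assms[of I1 I1] assms[of I1 I2] assms[of I1 I3] assms[of I2 I1] assms[of I2 I2]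
      assms[of I2 I3] assms[of I3 I1] assms[of I3 I2] assms[of I3 I3] by simp_all
  then show ?thesis
    by (cases i; cases j; cases k; cases l) (simp_all add: algebra_simps)
qed

lemma det3_neq_0:
  assumes inj: "\<And>x k. (\<And>i. mulv A x i = 0) \<Longrightarrow> x k = 0"
  shows "det3 A \<noteq> 0"
proof
  assume det: "det3 A = 0"
  have adj: "adj3 A k j = 0" for k j
    using inj[of "\<lambda>k. adj3 A k j" k] mult_adj3[of A _ j] det by (simp add: mulv_def)
  have "A i k = 0" for i k
  proof -
    obtain l where l: "l \<noteq> k" by (metis idx.distinct(1))
    have "mulv A (\<lambda>m. A i l * unit_vec k m - A i k * unit_vec l m) j = 0" for j
      using adj3_eq_0_imp_minor[OF adj, of j k i l]
      by (cases k; cases l) (simp_all add: mulv_def sum_idx unit_vec_def algebra_simps)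
    from inj[OF this, of l] show ?thesis using l by (simp add: unit_vec_def)
  qed
  then show False using inj[of "unit_vec I1" I1] by (simp add: mulv_def unit_vec_def)
qed

definition inv3 :: "mat3 \<Rightarrow> mat3" where
  "inv3 A i j = adj3 A i j / det3 A"

lemma mult_inv3: "det3 A \<noteq> 0 \<Longrightarrow> (\<Sum>k\<in>UNIV. A i k * inv3 A k j) = (if i = j then 1 else 0)"
  using mult_adj3[of A i j] by (simp add: inv3_def flip: sum_divide_distrib)

lemma inv3_mult: "det3 A \<noteq> 0 \<Longrightarrow> (\<Sum>k\<in>UNIV. inv3 A i k * A k j) = (if i = j then 1 else 0)"
  using adj3_mult[of A i j] by (simp add: inv3_def flip: sum_divide_distrib)

section \<open>Substitution and evaluation\<close>

definition mono_eval :: "(var \<Rightarrow> 'a::comm_ring_1) \<Rightarrow> (var \<Rightarrow>\<^sub>0 nat) \<Rightarrow> 'a" where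
  "mono_eval \<sigma> m = \<sigma> X1 ^ Poly_Mapping.lookup m X1 * \<sigma> X2 ^ Poly_Mapping.lookup m X2
     * \<sigma> X3 ^ Poly_Mapping.lookup m X3 * \<sigma> Y ^ Poly_Mapping.lookup m Y"

lemma mono_eval_add: "mono_eval \<sigma> (m + n) = mono_eval \<sigma> m * mono_eval \<sigma> n"
  by (simp add: mono_eval_def lookup_add power_add algebra_simps)

locale coeff_hom =
  fixes \<chi> :: "complex \<Rightarrow> 'a::comm_ring_1"
  assumes hom_0: "\<chi> 0 = 0" and hom_1: "\<chi> 1 = 1"
    and hom_add: "\<chi> (a + b) = \<chi> a + \<chi> b" and hom_mult: "\<chi> (a * b) = \<chi> a * \<chi> b"
begin

definition peval :: "(var \<Rightarrow> 'a) \<Rightarrow> mpoly \<Rightarrow> 'a" where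
  "peval \<sigma> p = (\<Sum>m\<in>Poly_Mapping.keys p. \<chi> (Poly_Mapping.lookup p m) * mono_eval \<sigma> m)"

lemma peval_add: "peval \<sigma> (p + q) = peval \<sigma> p + peval \<sigma> q"
  unfolding peval_def by (rule setsum_keys_plus_distrib) (simp_all add: hom_0 hom_add distrib_right)

lemma peval_0 [simp]: "peval \<sigma> 0 = 0"
  by (simp add: peval_def)

lemma peval_sum: "peval \<sigma> (sum f A) = (\<Sum>x\<in>A. peval \<sigma> (f x))"
  by (induction A rule: infinite_finite_induct) (simp_all add: peval_add)

lemma peval_single: "peval \<sigma> (Poly_Mapping.single m c) = \<chi> c * mono_eval \<sigma> m"
  by (cases "c = 0") (simp_all add: peval_def hom_0)

lemma peval_diff: "peval \<sigma> (p - q) = peval \<sigma> p - peval \<sigma> q"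
  using peval_add[of \<sigma> "p - q" q] by (simp add: eq_diff_eq)

lemma peval_mult: "peval \<sigma> (p * q) = peval \<sigma> p * peval \<sigma> q"
proof -
  let ?K = "Poly_Mapping.keys p" and ?L = "Poly_Mapping.keys q"
  have "p * q = (\<Sum>m\<in>?K. \<Sum>n\<in>?L.
      Poly_Mapping.single (m + n) (Poly_Mapping.lookup p m * Poly_Mapping.lookup q n))"
    by (subst (1 2) poly_mapping_sum_single) (simp add: sum_product mult_single)
  then have "peval \<sigma> (p * q) = (\<Sum>m\<in>?K. \<Sum>n\<in>?L.
      \<chi> (Poly_Mapping.lookup p m) * mono_eval \<sigma> m * (\<chi> (Poly_Mapping.lookup q n) * mono_eval \<sigma> n))"
    by (simp add: peval_sum peval_single hom_mult mono_eval_add algebra_simps)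
  also have "\<dots> = peval \<sigma> p * peval \<sigma> q"
    unfolding peval_def by (rule sum_product[symmetric])
  finally show ?thesis .
qed

lemma peval_const: "peval \<sigma> (const c) = \<chi> c"
  by (simp add: const_def peval_single mono_eval_def)

lemma peval_1: "peval \<sigma> 1 = 1"
  using peval_const[of \<sigma> 1] hom_1 by simp

lemma peval_power: "peval \<sigma> (p ^ k) = peval \<sigma> p ^ k"
  by (induction k) (simp_all add: peval_1 peval_mult)

lemma peval_pvar: "peval \<sigma> (pvar v) = \<sigma> v"
  by (cases v) (simp_all add: pvar_def peval_single hom_1 mono_eval_def lookup_single)

lemma peval_y_free_cong:
  assumes "y_free p" "\<sigma> X1 = \<tau> X1" "\<sigma> X2 = \<tau> X2" "\<sigma> X3 = \<tau> X3"
  shows "peval \<sigma> p = peval \<tau> p"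
  unfolding peval_def by (rule sum.cong) (use assms in \<open>auto simp: y_free_def mono_eval_def\<close>)

end

interpretation eval: coeff_hom "\<lambda>c::complex. c"
  by unfold_locales simp_all

interpretation subst: coeff_hom const
  by unfold_locales (simp_all add: const_simps)

abbreviation subst :: "(var \<Rightarrow> mpoly) \<Rightarrow> mpoly \<Rightarrow> mpoly" where
  "subst \<equiv> subst.peval"

lemma mono_eval_pvar: "mono_eval pvar m = Poly_Mapping.single m 1"
  by (subst (2) expo_lookup) (simp add: mono_eval_def pvar_power_expo mult_single)

lemma subst_pvar: "subst pvar p = p"
  by (simp add: subst.peval_def mono_eval_pvar const_mult_single flip: poly_mapping_sum_single)

lemma subst_subst: "subst \<sigma> (subst \<tau> p) = subst (\<lambda>v. subst \<sigma> (\<tau> v)) p"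
  unfolding subst.peval_def[of \<tau>] subst.peval_def[of "\<lambda>v. subst \<sigma> (\<tau> v)"]
  by (simp add: subst.peval_sum subst.peval_mult subst.peval_const subst.peval_power mono_eval_def)

lemma subst_subst_inverse: "(\<And>v. subst \<sigma> (\<tau> v) = pvar v) \<Longrightarrow> subst \<sigma> (subst \<tau> p) = p"
  by (simp add: subst_subst subst_pvar)

lemma homogeneous_subst:
  assumes "homogeneous 1 (\<sigma> X1)" "homogeneous 1 (\<sigma> X2)" "homogeneous 1 (\<sigma> X3)" "homogeneous 2 (\<sigma> Y)"
    and "homogeneous d p"
  shows "homogeneous d (subst \<sigma> p)"
  unfolding subst.peval_def homogeneous_iff_homog
proof (intro homog_sum homog_const_mult[OF additive_wdeg])
  fix m assume m: "m \<in> Poly_Mapping.keys p"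
  have "homog wdeg (Poly_Mapping.lookup m X1 * 1 + Poly_Mapping.lookup m X2 * 1
      + Poly_Mapping.lookup m X3 * 1 + Poly_Mapping.lookup m Y * 2) (mono_eval \<sigma> m)"
    unfolding mono_eval_def using assms(1-4)
    by (intro homog_mult[OF additive_wdeg] homog_power[OF additive_wdeg])
      (simp_all add: homogeneous_iff_homog)
  then show "homog wdeg d (mono_eval \<sigma> m)"
    using m assms(5) by (simp add: homogeneous_def wdeg_def algebra_simps)
qed

section \<open>The isomorphism in degree two\<close>

locale jac_even_iso =
  fixes g h g' h' :: mpoly and \<phi> :: "mpoly set \<Rightarrow> mpoly set"
  assumes y_free_g: "y_free g" and homogeneous_g: "homogeneous 4 g"
    and y_free_h: "y_free h" and homogeneous_h: "homogeneous 6 h"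
    and y_free_g': "y_free g'" and homogeneous_g': "homogeneous 4 g'"
    and y_free_h': "y_free h'" and homogeneous_h': "homogeneous 6 h'"
    and iso: "graded_alg_iso_even (ycubic g h) (ycubic g' h') \<phi>"
begin

abbreviation "F \<equiv> ycubic g h"
abbreviation "F' \<equiv> ycubic g' h'"

lemma jac_ideal_low_degree_F:
  "p \<in> jac_ideal F \<Longrightarrow> homogeneous d p \<Longrightarrow> d < 4 \<Longrightarrow> p = 0"
  using jac_ideal_low_degree[OF homogeneous_ycubic[OF homogeneous_g homogeneous_h]] by simp

lemma jac_ideal_low_degree_F':
  "p \<in> jac_ideal F' \<Longrightarrow> homogeneous d p \<Longrightarrow> d < 4 \<Longrightarrow> p = 0"
  using jac_ideal_low_degree[OF homogeneous_ycubic[OF homogeneous_g' homogeneous_h']] by simp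

lemma ring_iso: "\<phi> \<in> ring_iso (Jac_even F) (Jac_even F')"
  using iso by (simp add: graded_alg_iso_even_def)

lemma phi_add:
  assumes "even_poly p" "even_poly q" "\<phi> (jcoset F p) = jcoset F' p'" "\<phi> (jcoset F q) = jcoset F' q'"
  shows "\<phi> (jcoset F (p + q)) = jcoset F' (p' + q')"
  using ring_iso_memE(3)[OF ring_iso jcoset_in_carrier jcoset_in_carrier, OF assms(1,2)] assms(3,4)
  by (simp add: Jac_add_jcoset)

lemma phi_mult:
  assumes "even_poly p" "even_poly q" "\<phi> (jcoset F p) = jcoset F' p'" "\<phi> (jcoset F q) = jcoset F' q'"
  shows "\<phi> (jcoset F (p * q)) = jcoset F' (p' * q')"
  using ring_iso_memE(2)[OF ring_iso jcoset_in_carrier jcoset_in_carrier, OF assms(1,2)] assms(3,4)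
  by (simp add: Jac_mult_jcoset)

lemma phi_1: "\<phi> (jcoset F 1) = jcoset F' 1"
  using ring_iso_memE(4)[OF ring_iso] by (simp add: Jac_one)

lemma phi_const_mult:
  assumes "even_poly p" "\<phi> (jcoset F p) = jcoset F' p'"
  shows "\<phi> (jcoset F (const c * p)) = jcoset F' (const c * p')"
  using iso assms by (simp add: graded_alg_iso_even_def Jac_mult_jcoset)

lemma phi_0: "\<phi> (jcoset F 0) = jcoset F' 0"
  using phi_const_mult[of 1 1 0] phi_1 by simp

lemma phi_sum:
  assumes "finite A" "\<And>i. i \<in> A \<Longrightarrow> even_poly (p i) \<and> \<phi> (jcoset F (p i)) = jcoset F' (r i)"
  shows "\<phi> (jcoset F (sum p A)) = jcoset F' (sum r A)"
  using assms
proof (induction A rule: finite_induct)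
  case (insert x A)
  then show ?case by (simp, intro phi_add) (auto intro!: even_poly_sum)
qed (simp add: phi_0)

lemma phi_inj:
  assumes "even_poly p" "even_poly q" "\<phi> (jcoset F p) = \<phi> (jcoset F q)"
  shows "jcoset F p = jcoset F q"
  using ring_iso_memE(5)[OF ring_iso] jcoset_in_carrier[OF assms(1)] jcoset_in_carrier[OF assms(2)] assms(3)
  unfolding bij_betw_def inj_on_def by blast

lemma phi_surj:
  assumes "even_poly r" obtains p where "even_poly p" "\<phi> (jcoset F p) = jcoset F' r"
proof -
  have "jcoset F' r \<in> \<phi> ` carrier (Jac_even F)"
    using ring_iso_memE(5)[OF ring_iso] jcoset_in_carrier[of r F', OF assms] by (simp add: bij_betw_def)
  then show ?thesis using that by auto
qed

lemma phi_graded: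
  "homogeneous (2 * n) p \<Longrightarrow> \<exists>q. homogeneous (2 * n) q \<and> \<phi> (jcoset F p) = jcoset F' q"
  using iso by (simp add: graded_alg_iso_even_def)

text \<open>Since the Jacobian ideal vanishes below degree 4, \<open>\<phi>\<close> commutes with taking degree-2 parts.\<close>

lemma phi_hcomp_2:
  assumes "even_poly p" "\<phi> (jcoset F p) = jcoset F' s"
  shows "\<phi> (jcoset F (hcomp wdeg 2 p)) = jcoset F' (hcomp wdeg 2 s)"
proof -
  define D where "D = wdeg ` Poly_Mapping.keys p"
  have finD: "finite D" unfolding D_def by simp
  have "\<exists>r. homogeneous d r \<and> \<phi> (jcoset F (hcomp wdeg d p)) = jcoset F' r" if "d \<in> D" for d
  proof -
    have "even d" using that assms(1) by (auto simp: D_def even_poly_def)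
    then obtain n where "d = 2 * n" by (rule evenE)
    then show ?thesis using phi_graded[of n] by (simp add: homogeneous_iff_homog homog_hcomp)
  qed
  then obtain r where r: "\<And>d. d \<in> D \<Longrightarrow> homogeneous d (r d) \<and> \<phi> (jcoset F (hcomp wdeg d p)) = jcoset F' (r d)"
    by metis
  have "\<phi> (jcoset F (\<Sum>d\<in>D. hcomp wdeg d p)) = jcoset F' (\<Sum>d\<in>D. r d)"
    by (rule phi_sum[OF finD]) (use r assms(1) even_poly_hcomp in auto)
  then have "jcoset F' (\<Sum>d\<in>D. r d) = jcoset F' s"
    using assms(2) sum_hcomp[OF finD, of wdeg p] by (simp add: D_def)
  then have "(\<Sum>d\<in>D. r d) - s \<in> jac_ideal F'"
    by (simp only: jcoset_eq_iff)
  then have "hcomp wdeg 2 (\<Sum>d\<in>D. r d) - hcomp wdeg 2 s \<in> jac_ideal F'"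
    using hcomp_jac_ideal[OF homogeneous_ycubic[OF homogeneous_g' homogeneous_h']]
    by (fastforce simp: hcomp_diff)
  moreover have "homogeneous 2 (hcomp wdeg 2 (\<Sum>d\<in>D. r d) - hcomp wdeg 2 s)"
    by (simp add: homogeneous_iff_homog homog_diff homog_hcomp)
  ultimately have "hcomp wdeg 2 s = hcomp wdeg 2 (\<Sum>d\<in>D. r d)"
    using jac_ideal_low_degree_F' by fastforce
  also have "\<dots> = (\<Sum>d\<in>D. if d = 2 then r d else 0)"
    unfolding hcomp_sum using r by (intro sum.cong) (auto simp: homogeneous_iff_homog hcomp_homog)
  finally have s: "hcomp wdeg 2 s = (if 2 \<in> D then r 2 else 0)"
    using finD by simp
  show ?thesis
  proof (cases "2 \<in> D")
    case True then show ?thesis using r s by simp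
  next
    case False then show ?thesis using s phi_0 hcomp_eq_0[of 2 wdeg p] by (simp add: D_def)
  qed
qed

definition phi2 :: "mono2 \<Rightarrow> mpoly" where
  "phi2 u = (SOME q. homogeneous 2 q \<and> \<phi> (jcoset F (mon2 u)) = jcoset F' q)"

lemma phi2: "homogeneous 2 (phi2 u)" "\<phi> (jcoset F (mon2 u)) = jcoset F' (phi2 u)"
proof -
  have "\<exists>q. homogeneous 2 q \<and> \<phi> (jcoset F (mon2 u)) = jcoset F' q"
    using phi_graded[of 1 "mon2 u"] homogeneous_mon2 by simp
  from someI_ex[OF this] show "homogeneous 2 (phi2 u)" "\<phi> (jcoset F (mon2 u)) = jcoset F' (phi2 u)"
    unfolding phi2_def by auto
qed

definition phi2_mat :: "mono2 \<Rightarrow> mono2 \<Rightarrow> complex" where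
  "phi2_mat u b = coeff2 (phi2 u) b"

lemma phi2_expand: "phi2 u = (\<Sum>b\<in>UNIV. const (phi2_mat u b) * mon2 b)"
  unfolding phi2_mat_def using homogeneous_2_expand[OF phi2(1)] .

lemma phi_lin_comb_mon2:
  "\<phi> (jcoset F (\<Sum>u\<in>UNIV. const (t u) * mon2 u)) = jcoset F' (\<Sum>u\<in>UNIV. const (t u) * phi2 u)"
  by (rule phi_sum) (simp_all add: even_poly_mult even_poly_mon2 phi_const_mult[OF even_poly_mon2 phi2(2)])

lemma phi2_independent:
  assumes "(\<Sum>u\<in>UNIV. const (t u) * phi2 u) = 0"
  shows "t u = 0"
proof -
  have "\<phi> (jcoset F (\<Sum>u\<in>UNIV. const (t u) * mon2 u)) = \<phi> (jcoset F 0)"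
    using phi_lin_comb_mon2[of t] assms phi_0 by simp
  then have "jcoset F (\<Sum>u\<in>UNIV. const (t u) * mon2 u) = jcoset F 0"
    by (rule phi_inj[rotated 2]) (auto intro!: even_poly_sum even_poly_mult even_poly_mon2)
  then have "(\<Sum>u\<in>UNIV. const (t u) * mon2 u) \<in> jac_ideal F"
    by (simp add: jcoset_eq_iff)
  from jac_ideal_low_degree_F[OF this homogeneous_lin_comb_mon2] show ?thesis
    by (simp add: lin_comb_mon2_eq_0)
qed

lemma phi2_spanning: "\<exists>t. (\<Sum>u\<in>UNIV. const (t u) * phi2 u) = mon2 b"
proof -
  obtain p where p: "even_poly p" "\<phi> (jcoset F p) = jcoset F' (mon2 b)"
    using phi_surj[OF even_poly_mon2] by blast
  define t where "t = coeff2 (hcomp wdeg 2 p)"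
  have "hcomp wdeg 2 p = (\<Sum>u\<in>UNIV. const (t u) * mon2 u)"
    unfolding t_def by (rule homogeneous_2_expand) (simp add: homogeneous_iff_homog homog_hcomp)
  moreover have "hcomp wdeg 2 (mon2 b) = mon2 b"
    using hcomp_homog[OF homogeneous_mon2[unfolded homogeneous_iff_homog]] by simp
  ultimately have "jcoset F' (\<Sum>u\<in>UNIV. const (t u) * phi2 u) = jcoset F' (mon2 b)"
    using phi_hcomp_2[OF p] phi_lin_comb_mon2 by simp
  then have "(\<Sum>u\<in>UNIV. const (t u) * phi2 u) - mon2 b \<in> jac_ideal F'"
    by (simp only: jcoset_eq_iff)
  moreover have "homogeneous 2 ((\<Sum>u\<in>UNIV. const (t u) * phi2 u) - mon2 b)"
    using homogeneous_lin_comb[of UNIV 2 phi2 t] phi2(1) homogeneous_mon2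
    by (simp add: homogeneous_iff_homog homog_diff)
  ultimately show ?thesis
    using jac_ideal_low_degree_F' by fastforce
qed

lemma phi2_veronese:
  assumes "mon2 u1 * mon2 u2 = mon2 u3 * mon2 u4"
  shows "\<exists>c. phi2 u1 * phi2 u2 - phi2 u3 * phi2 u4 = const c * (const 3 * pvar Y ^ 2 + g')"
proof -
  have "\<phi> (jcoset F (mon2 u1 * mon2 u2)) = jcoset F' (phi2 u1 * phi2 u2)"
    "\<phi> (jcoset F (mon2 u3 * mon2 u4)) = jcoset F' (phi2 u3 * phi2 u4)"
    by (rule phi_mult; simp add: even_poly_mon2 phi2)+
  then have "jcoset F' (phi2 u1 * phi2 u2) = jcoset F' (phi2 u3 * phi2 u4)"
    using assms by simp
  then have "phi2 u1 * phi2 u2 - phi2 u3 * phi2 u4 \<in> jac_ideal F'"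
    by (simp only: jcoset_eq_iff)
  moreover have "homogeneous (6 - 2) (phi2 u1 * phi2 u2 - phi2 u3 * phi2 u4)"
    using phi2(1) homog_mult[OF additive_wdeg, of 2 _ 2]
    by (simp add: homogeneous_iff_homog homog_diff)
  ultimately show ?thesis
    using jac_ideal_degree_minus_2[OF homogeneous_ycubic[OF homogeneous_g' homogeneous_h']]
    by (simp add: pderiv_var_Y_ycubic[OF y_free_g' y_free_h'])
qed

definition ycoef :: "mono2 \<Rightarrow> complex" where
  "ycoef u = phi2_mat u MY"

definition xpart :: "mono2 \<Rightarrow> mpoly" where
  "xpart u = phi2 u - const (ycoef u) * pvar Y"

lemma phi2_eq_xpart: "phi2 u = xpart u + const (ycoef u) * pvar Y"
  by (simp add: xpart_def)

lemma xpart_expand: "xpart u = (\<Sum>b\<in>xmonos. const (phi2_mat u b) * mon2 b)"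
  unfolding xpart_def ycoef_def by (subst phi2_expand) (simp add: sum_UNIV_mono2 mon2_simps)

lemma y_free_xpart: "y_free (xpart u)"
  unfolding xpart_expand y_free_iff_homog
  by (intro homog_sum homog_const_mult[OF additive_ydeg]) (simp add: y_free_mon2[unfolded y_free_iff_homog])

text \<open>Write \<open>\<phi>(u) = X\<^sub>u + b\<^sub>u y\<close> with \<open>X\<^sub>u\<close> free of \<open>y\<close>. A Veronese relation \<open>u\<^sub>1 u\<^sub>2 = u\<^sub>3 u\<^sub>4\<close> then
  splits by powers of \<open>y\<close> into three relations, the multiple of \<open>3 y\<^sup>2 + g'\<close> contributing to
  \<open>y\<^sup>0\<close> and \<open>y\<^sup>2\<close> only.\<close>

lemma veronese_split:
  assumes "mon2 u1 * mon2 u2 = mon2 u3 * mon2 u4"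
  obtains c where "xpart u1 * xpart u2 - xpart u3 * xpart u4 = const c * g'"
    "const (ycoef u1) * xpart u2 + const (ycoef u2) * xpart u1
       - const (ycoef u3) * xpart u4 - const (ycoef u4) * xpart u3 = 0"
    "ycoef u1 * ycoef u2 - ycoef u3 * ycoef u4 = 3 * c"
proof -
  obtain c where c: "phi2 u1 * phi2 u2 - phi2 u3 * phi2 u4 = const c * (const 3 * pvar Y ^ 2 + g')"
    using phi2_veronese[OF assms] by blast
  define A where "A = xpart u1 * xpart u2 - xpart u3 * xpart u4 - const c * g'"
  define B where "B = const (ycoef u1) * xpart u2 + const (ycoef u2) * xpart u1
       - const (ycoef u3) * xpart u4 - const (ycoef u4) * xpart u3"
  define C where "C = const (ycoef u1 * ycoef u2 - ycoef u3 * ycoef u4 - 3 * c)"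
  have "A + B * pvar Y + C * pvar Y ^ 2 = 0"
    using c unfolding A_def B_def C_def phi2_eq_xpart
    by (simp add: const_simps algebra_simps power2_eq_square)
  moreover have "y_free A" "y_free B" "y_free C"
    using y_free_xpart y_free_g' unfolding A_def B_def C_def y_free_iff_homog
    by (auto intro!: homog_diff homog_add homog_mult[OF additive_ydeg, of 0 _ 0, simplified]
        homog_const_mult[OF additive_ydeg] homog_const[OF additive_ydeg])
  ultimately have "A = 0" "B = 0" "C = 0" using y_free_quadratic_eq_0 by blast+
  then show ?thesis using that by (simp add: A_def B_def C_def)
qed

lemma veronese_y_linear:
  assumes "mon2 u1 * mon2 u2 = mon2 u3 * mon2 u4"
  shows "const (ycoef u1) * xpart u2 + const (ycoef u2) * xpart u1
       - const (ycoef u3) * xpart u4 - const (ycoef u4) * xpart u3 = 0"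
  using veronese_split[OF assms] by metis

lemma lin_comb_phi2:
  "(\<Sum>u\<in>UNIV. const (t u) * phi2 u)
     = (\<Sum>u\<in>UNIV. const (t u) * xpart u) + const (\<Sum>u\<in>UNIV. t u * ycoef u) * pvar Y"
  by (simp add: phi2_eq_xpart distrib_left sum.distrib sum_distrib_right const_sum const_mult mult.assoc)

text \<open>The \<open>\<phi>(u)\<close> being linearly independent, the coefficient vectors \<open>t\<close> with
  \<open>\<Sum>\<^sub>u t\<^sub>u \<phi>(u) \<in> \<complex> y\<close> form a space of dimension at most one.\<close>

lemma lin_comb_phi2_eq_y_proportional:
  assumes "(\<Sum>u\<in>UNIV. const (t u) * phi2 u) = const s * pvar Y"
      and "(\<Sum>u\<in>UNIV. const (t' u) * phi2 u) = const s' * pvar Y"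
  shows "s' * t u = s * t' u"
proof -
  have "(\<Sum>u\<in>UNIV. const (s' * t u - s * t' u) * phi2 u)
     = const s' * (\<Sum>u\<in>UNIV. const (t u) * phi2 u) - const s * (\<Sum>u\<in>UNIV. const (t' u) * phi2 u)"
    by (simp add: const_simps sum_distrib_left sum_subtractf algebra_simps)
  also have "\<dots> = 0" using assms by (simp add: algebra_simps)
  finally show ?thesis using phi2_independent by fastforce
qed

text \<open>The coefficient vectors of the \<open>y\<close>-linear parts of four of the Veronese relations.\<close>

definition yrel :: "nat \<Rightarrow> mono2 \<Rightarrow> complex" where
  "yrel k u = (if k = 1 then (case u of M11 \<Rightarrow> ycoef M22 | M22 \<Rightarrow> ycoef M11 | M12 \<Rightarrow> - 2 * ycoef M12 | _ \<Rightarrow> 0)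
     else if k = 2 then (case u of M11 \<Rightarrow> ycoef M33 | M33 \<Rightarrow> ycoef M11 | M13 \<Rightarrow> - 2 * ycoef M13 | _ \<Rightarrow> 0)
     else if k = 3 then (case u of M22 \<Rightarrow> ycoef M33 | M33 \<Rightarrow> ycoef M22 | M23 \<Rightarrow> - 2 * ycoef M23 | _ \<Rightarrow> 0)
     else (case u of M11 \<Rightarrow> ycoef M23 | M23 \<Rightarrow> ycoef M11 | M12 \<Rightarrow> - ycoef M13 | M13 \<Rightarrow> - ycoef M12 | _ \<Rightarrow> 0))"

lemma yrel_phi2:
  assumes "k \<in> {1, 2, 3, 4}"
  shows "(\<Sum>u\<in>UNIV. const (yrel k u) * phi2 u) = const (\<Sum>u\<in>UNIV. yrel k u * ycoef u) * pvar Y"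
proof -
  have "(\<Sum>u\<in>UNIV. const (yrel k u) * xpart u) = 0"
    using veronese_y_linear[OF mon2_veronese(1)] veronese_y_linear[OF mon2_veronese(2)]
      veronese_y_linear[OF mon2_veronese(3)] veronese_y_linear[OF mon2_veronese(4)] assms
    by (auto simp: sum_mono2 yrel_def const_simps algebra_simps)
  then show ?thesis by (simp add: lin_comb_phi2)
qed

lemma yrel_minor:
  assumes "k \<in> {1, 2, 3, 4}" "k' \<in> {1, 2, 3, 4}"
  shows "yrel k u * yrel k' u' = yrel k u' * yrel k' u"
proof -
  define s where "s j = (\<Sum>u\<in>UNIV. yrel j u * ycoef u)" for j
  have rel: "j \<in> {1, 2, 3, 4} \<Longrightarrow> (\<Sum>u\<in>UNIV. const (yrel j u) * phi2 u) = const (s j) * pvar Y" for j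
    using yrel_phi2 s_def by simp
  show ?thesis
  proof (cases "\<exists>j\<in>{1, 2, 3, 4}. s j \<noteq> 0")
    case True
    then obtain j where j: "j \<in> {1, 2, 3, 4}" "s j \<noteq> 0" by blast
    have "i \<in> {1, 2, 3, 4} \<Longrightarrow> yrel i v = s i * yrel j v / s j" for i v
      using lin_comb_phi2_eq_y_proportional[OF rel[OF j(1)] rel[of i], of v] j(2)
      by (simp add: field_simps)
    then show ?thesis using assms by (simp add: field_simps)
  next
    case False
    then have "yrel k v = 0" for v
      using rel[OF assms(1)] phi2_independent[of "yrel k"] assms(1) by auto
    then show ?thesis by simp
  qed
qed

lemma ycoef_eq_0: "u \<noteq> MY \<Longrightarrow> ycoef u = 0"
proof -
  have m: "k \<in> {1, 2, 3, 4} \<Longrightarrow> k' \<in> {1, 2, 3, 4} \<Longrightarrow> yrel k u * yrel k' u' = yrel k u' * yrel k' u"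
    for k k' u u' using yrel_minor by blast
  have "ycoef M11 = 0" using m[of 1 2 M22 M33] by (simp add: yrel_def)
  moreover have "ycoef M22 = 0" using m[of 1 3 M11 M33] by (simp add: yrel_def)
  moreover have "ycoef M33 = 0" using m[of 2 3 M11 M22] by (simp add: yrel_def)
  moreover have "ycoef M12 = 0" using m[of 1 4 M12 M13] by (simp add: yrel_def)
  moreover have "ycoef M13 = 0" using m[of 2 4 M13 M12] by (simp add: yrel_def)
  moreover have "ycoef M23 = 0" using m[of 3 4 M23 M11] by (simp add: yrel_def)
  ultimately show "u \<noteq> MY \<Longrightarrow> ycoef u = 0" by (cases u) auto
qed

lemma phi2_mxx_eq_xpart: "phi2 (mxx i j) = xpart (mxx i j)"
  by (simp add: phi2_eq_xpart ycoef_eq_0)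

lemma xpart_veronese:
  assumes "mon2 u1 * mon2 u2 = mon2 u3 * mon2 u4" "u1 \<noteq> MY" "u2 \<noteq> MY" "u3 \<noteq> MY" "u4 \<noteq> MY"
  shows "xpart u1 * xpart u2 = xpart u3 * xpart u4"
  using veronese_split[OF assms(1)] assms(2-5) by (simp add: ycoef_eq_0)

lemma ycoef_MY_neq_0: "ycoef MY \<noteq> 0"
proof -
  obtain t where t: "(\<Sum>u\<in>UNIV. const (t u) * phi2 u) = mon2 MY" using phi2_spanning by blast
  have "(\<Sum>u\<in>UNIV. t u * ycoef u) = 1"
    using arg_cong[of _ _ "\<lambda>p. coeff2 p MY", OF t]
    by (simp add: coeff2_lin_comb coeff2_mon2 ycoef_def phi2_mat_def)
  then show ?thesis using ycoef_eq_0 by (auto simp: sum_UNIV_mono2)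
qed

end
section \<open>The degree-two images are products of linear forms\<close>

definition xpoint :: "vec3 \<Rightarrow> var \<Rightarrow> complex" where
  "xpoint x v = (case v of X1 \<Rightarrow> x I1 | X2 \<Rightarrow> x I2 | X3 \<Rightarrow> x I3 | Y \<Rightarrow> 0)"

lemma peval_xpoint_mon2: "eval.peval (xpoint x) (mon2 b) = mval b x"
  by (cases b) (simp_all add: mon2_simps eval.peval_mult eval.peval_pvar eval.peval_power
      xpoint_def power2_eq_square)

context jac_even_iso
begin

lemma peval_xpoint_xpart: "eval.peval (xpoint x) (xpart u) = (\<Sum>b\<in>xmonos. phi2_mat u b * mval b x)"
  by (simp add: xpart_expand eval.peval_sum eval.peval_mult eval.peval_const peval_xpoint_mon2)

lemma phi2_mat_rank_le_one: "minor2 (\<lambda>i j. \<Sum>b\<in>xmonos. phi2_mat (mxx i j) b * mval b x) i j m n = 0"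
proof -
  define E where "E u = eval.peval (xpoint x) (xpart u)" for u
  have "E M11 * E M22 = E M12 * E M12" "E M11 * E M33 = E M13 * E M13" "E M22 * E M33 = E M23 * E M23"
    "E M11 * E M23 = E M12 * E M13" "E M22 * E M13 = E M12 * E M23" "E M33 * E M12 = E M13 * E M23"
    using xpart_veronese[OF mon2_veronese(1)] xpart_veronese[OF mon2_veronese(2)]
      xpart_veronese[OF mon2_veronese(3)] xpart_veronese[OF mon2_veronese(4)]
      xpart_veronese[OF mon2_veronese(5)] xpart_veronese[OF mon2_veronese(6)]
    by (simp_all add: E_def flip: eval.peval_mult)
  then have "minor2 (\<lambda>i j. E (mxx i j)) i j m n = 0"
    unfolding minor2_def by (cases i; cases j; cases m; cases n) (simp_all add: algebra_simps)
  then show ?thesis by (simp add: E_def peval_xpoint_xpart)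
qed

text \<open>The matrix of \<open>\<phi>\<close> in degree two is invertible and its \<open>y\<close>-column vanishes off the
  diagonal, so its restriction to the \<open>x\<close>-monomials is invertible as well.\<close>

lemma phi2_mat_xmonos_independent:
  assumes c: "\<And>w. w \<in> xmonos \<Longrightarrow> (\<Sum>b'\<in>xmonos. phi2_mat w b' * c b') = 0" and b: "b \<in> xmonos"
  shows "c b = 0"
proof -
  obtain t where t0: "(\<Sum>u\<in>UNIV. const (t u) * phi2 u) = mon2 b" using phi2_spanning by blast
  have t: "(\<Sum>u\<in>UNIV. t u * phi2_mat u b') = (if b' = b then 1 else 0)" for b'
    using arg_cong[of _ _ "\<lambda>p. coeff2 p b'", OF t0] by (simp add: coeff2_lin_comb coeff2_mon2 phi2_mat_def)
  have "phi2_mat u MY = 0" if "u \<noteq> MY" for u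
    using ycoef_eq_0[OF that] by (simp add: ycoef_def)
  then have "t MY * ycoef MY = 0"
    using t[of MY] b by (simp add: sum_UNIV_mono2 ycoef_def)
  then have tMY: "t MY = 0" using ycoef_MY_neq_0 by simp
  have "c b = (\<Sum>b'\<in>xmonos. c b' * (\<Sum>u\<in>UNIV. t u * phi2_mat u b'))"
    using b by (simp add: t)
  also have "\<dots> = (\<Sum>u\<in>UNIV. t u * (\<Sum>b'\<in>xmonos. phi2_mat u b' * c b'))"
    by (simp add: sum_distrib_left sum.swap[of _ xmonos] algebra_simps)
  also have "\<dots> = 0"
    using c tMY by (simp add: sum_UNIV_mono2)
  finally show ?thesis .
qed

sublocale quad: rank_one_quadrics phi2_mat
  by unfold_locales (fact phi2_mat_rank_le_one, fact phi2_mat_xmonos_independent)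

definition lmat :: mat3 where
  "lmat = (SOME A. (\<forall>x i j. quad.Q x i j = mulv A x i * mulv A x j)
     \<and> (\<forall>x k. (\<forall>i. mulv A x i = 0) \<longrightarrow> x k = 0))"

lemma lmat: "quad.Q x i j = mulv lmat x i * mulv lmat x j"
  "(\<And>i. mulv lmat x i = 0) \<Longrightarrow> x k = 0"
proof -
  have "\<exists>A. (\<forall>x i j. quad.Q x i j = mulv A x i * mulv A x j)
      \<and> (\<forall>x k. (\<forall>i. mulv A x i = 0) \<longrightarrow> x k = 0)"
    by (rule quad.factorization) blast
  from someI_ex[OF this] show "quad.Q x i j = mulv lmat x i * mulv lmat x j"
    "(\<And>i. mulv lmat x i = 0) \<Longrightarrow> x k = 0"
    unfolding lmat_def[symmetric] by blast+
qed

lemma phi2_mat_mxx_diag: "phi2_mat (mxx i j) (mxx k k) = lmat i k * lmat j k"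
proof -
  have "quad.Q (unit_vec k) i j = phi2_mat (mxx i j) (mxx k k)"
    by (simp add: quad.Q_def mval_unit_vec)
  then show ?thesis using lmat(1)[of "unit_vec k" i j] by simp
qed

lemma phi2_mat_mxx_off:
  assumes "k \<noteq> l"
  shows "phi2_mat (mxx i j) (mxx k l) = lmat i k * lmat j l + lmat i l * lmat j k"
proof -
  have "quad.Q (\<lambda>m. unit_vec k m + unit_vec l m) i j
      = phi2_mat (mxx i j) (mxx k k) + phi2_mat (mxx i j) (mxx l l) + phi2_mat (mxx i j) (mxx k l)"
    using assms by (simp add: quad.Q_def mval_unit_vec_add distrib_left sum.distrib)
  then show ?thesis
    using lmat(1)[of "\<lambda>m. unit_vec k m + unit_vec l m" i j]
    by (simp add: mulv_add phi2_mat_mxx_diag algebra_simps)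
qed

definition lform :: "idx \<Rightarrow> mpoly" where
  "lform i = (\<Sum>k\<in>UNIV. const (lmat i k) * pvar (xvar k))"

lemma phi2_mxx: "phi2 (mxx i j) = lform i * lform j"
proof -
  note phi2_mat_mxx_diag[of i j I1, simplified] phi2_mat_mxx_diag[of i j I2, simplified]
    phi2_mat_mxx_diag[of i j I3, simplified] phi2_mat_mxx_off[of I1 I2 i j, simplified]
    phi2_mat_mxx_off[of I1 I3 i j, simplified] phi2_mat_mxx_off[of I2 I3 i j, simplified]
  then show ?thesis
    unfolding phi2_mxx_eq_xpart xpart_expand lform_def
    by (simp add: sum_xmonos sum_idx mon2_simps const_simps algebra_simps power2_eq_square)
qed

lemma homogeneous_lform: "homogeneous 1 (lform i)"
  unfolding lform_def by (intro homogeneous_lin_comb homogeneous_pvar_xvar)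

lemma det3_lmat_neq_0: "det3 lmat \<noteq> 0"
  by (rule det3_neq_0) (rule lmat(2))

end

section \<open>The automorphism\<close>

lemma lin_comb_lin_comb_xvar:
  "(\<Sum>j\<in>UNIV. const (c j) * (\<Sum>m\<in>UNIV. const (d j m) * pvar (xvar m)))
     = (\<Sum>m\<in>UNIV. const (\<Sum>j\<in>UNIV. c j * d j m) * pvar (xvar m))"
proof -
  have "(\<Sum>j\<in>UNIV. const (c j) * (\<Sum>m\<in>UNIV. const (d j m) * pvar (xvar m)))
      = (\<Sum>j\<in>UNIV. \<Sum>m\<in>UNIV. const (c j * d j m) * pvar (xvar m))"
    by (simp add: sum_distrib_left const_mult mult.assoc)
  also have "\<dots> = (\<Sum>m\<in>UNIV. const (\<Sum>j\<in>UNIV. c j * d j m) * pvar (xvar m))"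
    by (subst sum.swap) (simp add: sum_distrib_right const_sum)
  finally show ?thesis .
qed

lemma lin_comb_delta_xvar: "(\<Sum>m\<in>UNIV. const (if k = m then 1 else 0) * pvar (xvar m)) = pvar (xvar k)"
  by (cases k) (simp_all add: sum_idx)

context jac_even_iso
begin

fun psi_var :: "var \<Rightarrow> mpoly" where
  "psi_var X1 = lform I1" | "psi_var X2 = lform I2" | "psi_var X3 = lform I3" | "psi_var Y = phi2 MY"

definition psi :: "mpoly \<Rightarrow> mpoly" where
  "psi = subst psi_var"

lemma psi_pvar_xvar: "psi (pvar (xvar k)) = lform k"
  by (cases k) (simp_all add: psi_def subst.peval_pvar)

lemma psi_mult: "psi (p * q) = psi p * psi q"
  by (simp add: psi_def subst.peval_mult)

lemma psi_add: "psi (p + q) = psi p + psi q"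
  by (simp add: psi_def subst.peval_add)

lemma psi_diff: "psi (p - q) = psi p - psi q"
  by (simp add: psi_def subst.peval_diff)

lemma psi_const: "psi (const c) = const c"
  by (simp add: psi_def subst.peval_const)

lemma psi_mon2: "psi (mon2 u) = phi2 u"
proof (cases "u = MY")
  case True
  then show ?thesis by (simp add: psi_def mon2_simps subst.peval_pvar)
next
  case False
  then obtain i j where "u = mxx i j" using mono2_cases_mxx by blast
  then show ?thesis by (simp add: mon2_mxx psi_mult psi_pvar_xvar phi2_mxx)
qed

lemma homogeneous_psi: "homogeneous d p \<Longrightarrow> homogeneous d (psi p)"
  unfolding psi_def
  by (rule homogeneous_subst) (simp_all only: psi_var.simps homogeneous_lform phi2(1))

lemma phi_eq_psi_single:
  assumes "even (wdeg m)"
  shows "\<phi> (jcoset F (Poly_Mapping.single m c)) = jcoset F' (psi (Poly_Mapping.single m c))"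
  using assms
proof (induction "wdeg m" arbitrary: m c rule: less_induct)
  case less
  show ?case
  proof (cases "m = 0")
    case True
    have "\<phi> (jcoset F (const c * 1)) = jcoset F' (const c * 1)"
      by (rule phi_const_mult) (simp_all add: phi_1)
    then show ?thesis using True by (simp add: const_def[symmetric] psi_const)
  next
    case False
    obtain u m' where m: "m = m' + exp2 u" using even_exponent_split[OF False less.prems] .
    then have "wdeg m' < wdeg m" "even (wdeg m')" using less.prems by (simp_all add: wdeg_add)
    then have "\<phi> (jcoset F (Poly_Mapping.single m' c * mon2 u))
        = jcoset F' (psi (Poly_Mapping.single m' c) * phi2 u)"
      by (intro phi_mult) (simp_all add: even_poly_single even_poly_mon2 less.hyps phi2(2))
    moreover have "Poly_Mapping.single m c = Poly_Mapping.single m' c * mon2 u"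
      by (simp add: m mon2_def mult_single)
    ultimately show ?thesis by (simp add: psi_mult psi_mon2)
  qed
qed

lemma phi_eq_psi:
  assumes "even_poly p"
  shows "\<phi> (jcoset F p) = jcoset F' (psi p)"
proof -
  have "psi p = (\<Sum>m\<in>Poly_Mapping.keys p. psi (Poly_Mapping.single m (Poly_Mapping.lookup p m)))"
    by (subst poly_mapping_sum_single) (simp add: psi_def subst.peval_sum)
  moreover have "\<phi> (jcoset F (\<Sum>m\<in>Poly_Mapping.keys p. Poly_Mapping.single m (Poly_Mapping.lookup p m)))
     = jcoset F' (\<Sum>m\<in>Poly_Mapping.keys p. psi (Poly_Mapping.single m (Poly_Mapping.lookup p m)))"
    using assms by (intro phi_sum) (auto simp: even_poly_def intro!: even_poly_single phi_eq_psi_single)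
  ultimately show ?thesis by (simp flip: poly_mapping_sum_single)
qed

definition linv :: "idx \<Rightarrow> mpoly" where
  "linv k = (\<Sum>j\<in>UNIV. const (inv3 lmat k j) * pvar (xvar j))"

fun linv_var :: "var \<Rightarrow> mpoly" where
  "linv_var X1 = linv I1" | "linv_var X2 = linv I2" | "linv_var X3 = linv I3" | "linv_var Y = 0"

text \<open>\<open>\<psi>\<close> maps \<open>y\<close> to \<open>X + b y\<close> with \<open>X\<close> free of \<open>y\<close> and \<open>b \<noteq> 0\<close>; this is inverted by
  \<open>y \<mapsto> (y - X\<^sup>\<prime>) / b\<close>, where \<open>X\<^sup>\<prime>\<close> is \<open>X\<close> in the inverted linear forms.\<close>

fun psi_inv_var :: "var \<Rightarrow> mpoly" where
  "psi_inv_var X1 = linv I1" | "psi_inv_var X2 = linv I2" | "psi_inv_var X3 = linv I3"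
| "psi_inv_var Y = const (1 / ycoef MY) * (pvar Y - subst linv_var (xpart MY))"

lemma psi_linv: "psi (linv k) = pvar (xvar k)"
proof -
  have "psi (linv k) = (\<Sum>j\<in>UNIV. const (inv3 lmat k j) * lform j)"
    by (simp add: linv_def psi_def subst.peval_sum subst.peval_mult subst.peval_const
        psi_pvar_xvar[unfolded psi_def])
  also have "\<dots> = pvar (xvar k)"
    unfolding lform_def lin_comb_lin_comb_xvar inv3_mult[OF det3_lmat_neq_0] by (rule lin_comb_delta_xvar)
  finally show ?thesis .
qed

lemma subst_psi_inv_var_lform: "subst psi_inv_var (lform k) = pvar (xvar k)"
proof -
  have "subst psi_inv_var (pvar (xvar j)) = linv j" for j
    by (cases j) (simp_all add: subst.peval_pvar)
  then have "subst psi_inv_var (lform k) = (\<Sum>j\<in>UNIV. const (lmat k j) * linv j)"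
    by (simp add: lform_def subst.peval_sum subst.peval_mult subst.peval_const)
  also have "\<dots> = pvar (xvar k)"
    unfolding linv_def lin_comb_lin_comb_xvar mult_inv3[OF det3_lmat_neq_0] by (rule lin_comb_delta_xvar)
  finally show ?thesis .
qed

lemma subst_psi_inv_var_psi_var: "subst psi_inv_var (psi_var v) = pvar v"
proof (cases v)
  case Y
  have "subst psi_inv_var (xpart MY) = subst linv_var (xpart MY)"
    by (rule subst.peval_y_free_cong[OF y_free_xpart]) simp_all
  then show ?thesis
    using Y ycoef_MY_neq_0
    by (simp add: phi2_eq_xpart subst.peval_add subst.peval_mult subst.peval_const subst.peval_pvar
        const_mult_cancel)
qed (use subst_psi_inv_var_lform[of I1] subst_psi_inv_var_lform[of I2] subst_psi_inv_var_lform[of I3]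
    in simp_all)

lemma psi_psi_inv_var: "psi (psi_inv_var v) = pvar v"
proof (cases v)
  case Y
  have "psi (subst linv_var (xpart MY)) = subst (\<lambda>v. psi (linv_var v)) (xpart MY)"
    unfolding psi_def by (rule subst_subst)
  also have "\<dots> = subst pvar (xpart MY)"
    by (rule subst.peval_y_free_cong[OF y_free_xpart]) (simp_all add: psi_linv)
  finally have "psi (subst linv_var (xpart MY)) = xpart MY" by (simp add: subst_pvar)
  moreover have "psi (pvar Y) = xpart MY + const (ycoef MY) * pvar Y"
    by (simp add: psi_def subst.peval_pvar phi2_eq_xpart)
  ultimately have "psi (psi_inv_var Y) = const (1 / ycoef MY) * (const (ycoef MY) * pvar Y)"
    by (simp add: psi_mult psi_const psi_diff)
  then show ?thesis using Y ycoef_MY_neq_0 by (simp flip: mult.assoc const_mult)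
qed (simp_all add: psi_linv)

lemma graded_alg_auto_psi: "graded_alg_auto psi"
  unfolding graded_alg_auto_def
proof (intro conjI allI impI)
  have "bij psi"
    by (rule bij_betwI[of _ _ _ "subst psi_inv_var"])
      (auto simp: psi_def subst_subst_inverse subst_psi_inv_var_psi_var psi_psi_inv_var[unfolded psi_def])
  then show "psi \<in> ring_iso mpoly_ring mpoly_ring"
    using psi_const[of 1] by (intro ring_iso_memI) (simp_all add: psi_mult psi_add)
qed (simp_all add: psi_mult psi_const homogeneous_psi)

end

theorem proposition4p9:
  fixes g h g' h' :: mpoly and \<phi> :: "mpoly set \<Rightarrow> mpoly set"
  assumes "y_free g" "homogeneous 4 g" "y_free h" "homogeneous 6 h"
      and "y_free g'" "homogeneous 4 g'" "y_free h'" "homogeneous 6 h'"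
      and "graded_alg_iso_even (pvar Y ^ 3 + g * pvar Y + h) (pvar Y ^ 3 + g' * pvar Y + h') \<phi>"
  shows "\<exists>\<psi>. graded_alg_auto \<psi> \<and>
           (\<forall>p. even_poly p \<longrightarrow>
              \<phi> (jcoset (pvar Y ^ 3 + g * pvar Y + h) p)
                = jcoset (pvar Y ^ 3 + g' * pvar Y + h') (\<psi> p))"
proof -
  interpret jac_even_iso g h g' h' \<phi>
    using assms by unfold_locales (simp_all add: ycubic_def)
  show ?thesis
    using graded_alg_auto_psi phi_eq_psi by (auto simp: ycubic_def)
qed

end
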